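(* Let $A_1,B_1,A_2,B_2$ be smooth $\mathbb{R}_{0,m}$-valued functions depending only on $\underline{y}$. The function $$(\cos z)A_1(\underline{y})+(\sin z)B_1(\underline{y})+(\cos\overline{z})A_2(\underline{y})+(\sin\overline{z})B_2(\underline{y})$$ is two-sided monogenic if and only if $A_1$ and $B_1$ are harmonic and satisfy the system $$A_1\partial_{\underline{y}}+B_1+e_1B_1e_1=0,\qquad B_1\partial_{\underline{y}}-A_1-e_1A_1e_1=0,$$ and $A_2=\frac{1}{2}\partial_{\underline{y}}B_1$, $B_2=-\frac{1}{2}\partial_{\underline{y}}A_1$. In particular, if $M(\underline{y})$ and $N(\underline{y})$ are right monogenic functions of $\underline{y}$ (i.e. $M\partial_{\underline{y}}=N\partial_{\underline{y}}=0$), then $$(\cos z)(M-e_1Me_1)+(\sin z)(N-e_1Ne_1)+\frac{1}{2}(\cos\overline{z})(\partial_{\underline{y}}N+e_1(\partial_{\underline{y}}N)e_1)-\frac{1}{2}(\sin\overline{z})(\partial_{\underline{y}}M+e_1(\partial_{\underline{y}}M)e_1)$$ is two-sided monogenic.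
   Context: Let $m\ge 2$ and let $\mathbb{R}_{0,m}$ be the real Clifford algebra generated by $e_1,\dots,e_m$ with $e_i^2=-1$ and $e_ie_j=-e_je_i$ for $i\neq j$; all products are Clifford products. Identify $(x_0,\dots,x_m)\in\mathbb{R}^{m+1}$ with $X=x_0+\sum_{j=1}^m x_je_j$, and write $z=x_0+x_1e_1$, $\overline{z}=x_0-x_1e_1$, $\underline{y}=\sum_{j=2}^m x_je_j$. The subalgebra spanned by $1,e_1$ is identified with $\mathbb{C}$ via $i\mapsto e_1$, and $\cos z,\sin z,\cos\overline z,\sin\overline z$ are the complex cosine and sine under this identification. Operators: $\partial_X f=\partial_{x_0}f+\sum_{j=1}^m e_j\partial_{x_j}f$, $f\partial_X=\partial_{x_0}f+\sum_{j=1}^m(\partial_{x_j}f)e_j$, $\partial_{\underline{y}}f=\sum_{j=2}^m e_j\partial_{x_j}f$, $f\partial_{\underline{y}}=\sum_{j=2}^m(\partial_{x_j}f)e_j$. A function is left monogenic if $\partial_Xf=0$, right monogenic if $f\partial_X=0$, two-sided monogenic if both. Harmonic means $\Delta A=0$ with $\Delta=\sum_{j=2}^m\partial_{x_j}^2=-\partial_{\underline{y}}^2$. *)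

theory Defs
  imports "HOL-Analysis.Analysis"
begin

text \<open>Elements of the Clifford algebra R_{0,m} are represented by their coordinates
  with respect to the basis e_A, A a subset of {1..m}: a function cl :: nat set => real
  which vanishes outside Pow {1..m}.  Points of R^{m+1} are functions nat => real,
  coordinate j being x j (only coordinates 0..m are relevant).\<close>

type_synonym cl = "nat set \<Rightarrow> real"
type_synonym pt = "nat \<Rightarrow> real"

definition cl_in :: "nat \<Rightarrow> cl \<Rightarrow> bool" where
  "cl_in m a \<longleftrightarrow> (\<forall>A. \<not> A \<subseteq> {1..m} \<longrightarrow> a A = 0)"

definition cl_zero :: cl where "cl_zero = (\<lambda>A. 0)"
definition cl_add :: "cl \<Rightarrow> cl \<Rightarrow> cl" where "cl_add a b = (\<lambda>A. a A + b A)"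
definition cl_sub :: "cl \<Rightarrow> cl \<Rightarrow> cl" where "cl_sub a b = (\<lambda>A. a A - b A)"
definition cl_scale :: "real \<Rightarrow> cl \<Rightarrow> cl" where "cl_scale r a = (\<lambda>A. r * a A)"
definition cl_sum :: "'i set \<Rightarrow> ('i \<Rightarrow> cl) \<Rightarrow> cl" where
  "cl_sum S g = (\<lambda>A. \<Sum>j\<in>S. g j A)"

definition cl_e :: "nat \<Rightarrow> cl" where "cl_e i = (\<lambda>A. if A = {i} then 1 else 0)"

text \<open>Sign in e_A e_B = sign * e_{A symdiff B}, with e_i^2 = -1, e_i e_j = - e_j e_i.\<close>
definition cl_sign :: "nat set \<Rightarrow> nat set \<Rightarrow> real" where
  "cl_sign A B = (-1) ^ (card {(a, b). a \<in> A \<and> b \<in> B \<and> b < a} + card (A \<inter> B))"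

definition cl_mult :: "nat \<Rightarrow> cl \<Rightarrow> cl \<Rightarrow> cl" where
  "cl_mult m a b = (\<lambda>C. \<Sum>A\<in>Pow {1..m}. \<Sum>B\<in>Pow {1..m}.
      if (A - B) \<union> (B - A) = C then cl_sign A B * a A * b B else 0)"

text \<open>Embedding of C = span{1, e_1} (i |-> e_1).\<close>
definition cl_of_complex :: "complex \<Rightarrow> cl" where
  "cl_of_complex w = (\<lambda>A. if A = {} then Re w else if A = {1} then Im w else 0)"

definition zc :: "pt \<Rightarrow> complex" where "zc x = Complex (x 0) (x 1)"
definition zbc :: "pt \<Rightarrow> complex" where "zbc x = cnj (Complex (x 0) (x 1))"

definition pdr :: "nat \<Rightarrow> (pt \<Rightarrow> real) \<Rightarrow> pt \<Rightarrow> real" where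
  "pdr j g x = deriv (\<lambda>t. g (x(j := t))) (x j)"

fun iter_pdr :: "nat list \<Rightarrow> (pt \<Rightarrow> real) \<Rightarrow> pt \<Rightarrow> real" where
  "iter_pdr [] g = g"
| "iter_pdr (j # js) g = pdr j (iter_pdr js g)"

definition smooth_real :: "nat \<Rightarrow> (pt \<Rightarrow> real) \<Rightarrow> bool" where
  "smooth_real m g \<longleftrightarrow> (\<forall>js. set js \<subseteq> {0..m} \<longrightarrow>
      continuous_on UNIV (iter_pdr js g) \<and>
      (\<forall>j\<in>{0..m}. \<forall>x. (\<lambda>t. iter_pdr js g (x(j := t))) differentiable (at (x j))))"

definition smooth_cl :: "nat \<Rightarrow> (pt \<Rightarrow> cl) \<Rightarrow> bool" where
  "smooth_cl m f \<longleftrightarrow> (\<forall>x. cl_in m (f x)) \<and> (\<forall>A. smooth_real m (\<lambda>x. f x A))"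

text \<open>f depends only on y = (x_2, ..., x_m).\<close>
definition depends_only_on_y :: "nat \<Rightarrow> (pt \<Rightarrow> cl) \<Rightarrow> bool" where
  "depends_only_on_y m f \<longleftrightarrow> (\<forall>x x'. (\<forall>j\<in>{2..m}. x j = x' j) \<longrightarrow> f x = f x')"

definition pd :: "nat \<Rightarrow> (pt \<Rightarrow> cl) \<Rightarrow> pt \<Rightarrow> cl" where
  "pd j f x = (\<lambda>A. pdr j (\<lambda>y. f y A) x)"

definition dX_left :: "nat \<Rightarrow> (pt \<Rightarrow> cl) \<Rightarrow> pt \<Rightarrow> cl" where
  "dX_left m f x = cl_add (pd 0 f x) (cl_sum {1..m} (\<lambda>j. cl_mult m (cl_e j) (pd j f x)))"
definition dX_right :: "nat \<Rightarrow> (pt \<Rightarrow> cl) \<Rightarrow> pt \<Rightarrow> cl" where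
  "dX_right m f x = cl_add (pd 0 f x) (cl_sum {1..m} (\<lambda>j. cl_mult m (pd j f x) (cl_e j)))"
definition dY_left :: "nat \<Rightarrow> (pt \<Rightarrow> cl) \<Rightarrow> pt \<Rightarrow> cl" where
  "dY_left m f x = cl_sum {2..m} (\<lambda>j. cl_mult m (cl_e j) (pd j f x))"
definition dY_right :: "nat \<Rightarrow> (pt \<Rightarrow> cl) \<Rightarrow> pt \<Rightarrow> cl" where
  "dY_right m f x = cl_sum {2..m} (\<lambda>j. cl_mult m (pd j f x) (cl_e j))"

definition left_monogenic :: "nat \<Rightarrow> (pt \<Rightarrow> cl) \<Rightarrow> bool" where
  "left_monogenic m f \<longleftrightarrow> (\<forall>x. dX_left m f x = cl_zero)"
definition right_monogenic :: "nat \<Rightarrow> (pt \<Rightarrow> cl) \<Rightarrow> bool" where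
  "right_monogenic m f \<longleftrightarrow> (\<forall>x. dX_right m f x = cl_zero)"
definition two_sided_monogenic :: "nat \<Rightarrow> (pt \<Rightarrow> cl) \<Rightarrow> bool" where
  "two_sided_monogenic m f \<longleftrightarrow> left_monogenic m f \<and> right_monogenic m f"

definition lap_y :: "nat \<Rightarrow> (pt \<Rightarrow> cl) \<Rightarrow> pt \<Rightarrow> cl" where
  "lap_y m f x = cl_sum {2..m} (\<lambda>j. pd j (pd j f) x)"
definition harmonic :: "nat \<Rightarrow> (pt \<Rightarrow> cl) \<Rightarrow> bool" where
  "harmonic m f \<longleftrightarrow> (\<forall>x. lap_y m f x = cl_zero)"

definition trig_combo :: "nat \<Rightarrow> (pt \<Rightarrow> cl) \<Rightarrow> (pt \<Rightarrow> cl) \<Rightarrow> (pt \<Rightarrow> cl) \<Rightarrow> (pt \<Rightarrow> cl) \<Rightarrow> pt \<Rightarrow> cl" where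
  "trig_combo m A1 B1 A2 B2 x =
     cl_add (cl_add (cl_mult m (cl_of_complex (cos (zc x))) (A1 x))
                    (cl_mult m (cl_of_complex (sin (zc x))) (B1 x)))
            (cl_add (cl_mult m (cl_of_complex (cos (zbc x))) (A2 x))
                    (cl_mult m (cl_of_complex (sin (zbc x))) (B2 x)))"

end

theory Submission
  imports Defs "HOL-Library.Function_Algebras"
begin

(* Under i \<mapsto> e\<^sub>1, cos z = cos x\<^sub>0 cosh x\<^sub>1 - e\<^sub>1 sin x\<^sub>0 sinh x\<^sub>1 and
   sin z = sin x\<^sub>0 cosh x\<^sub>1 + e\<^sub>1 cos x\<^sub>0 sinh x\<^sub>1, with e\<^sub>1 replaced by -e\<^sub>1 for the
   conjugate. So the function is cos x\<^sub>0 cosh x\<^sub>1 W\<^sub>1 + sin x\<^sub>0 cosh x\<^sub>1 W\<^sub>2 +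
   sin x\<^sub>0 sinh x\<^sub>1 e\<^sub>1 W\<^sub>3 + cos x\<^sub>0 sinh x\<^sub>1 e\<^sub>1 W\<^sub>4 with W\<^sub>i depending only on y,
   and both Dirac operators map a function of this shape to another one: left multiplication
   by e\<^sub>j (j \<ge> 2) anticommutes with left multiplication by e\<^sub>1, right multiplication
   commutes with it. As the four trigonometric coefficients are linearly independent,
   monogenicity is a linear system for the W\<^sub>i. From the left it reads A\<^sub>2 = \<partial>B\<^sub>1/2,
   B\<^sub>2 = -\<partial>A\<^sub>1/2, \<partial>A\<^sub>2 = \<partial>B\<^sub>2 = 0 (\<partial> = \<partial>\<^sub>y acting from the left); from the right it
   is the stated system for (A\<^sub>1, B\<^sub>1) plus an analogous one for (A\<^sub>2, B\<^sub>2). Since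
   \<partial>\<partial> = -\<Delta> by symmetry of second derivatives and \<partial> commutes with the right-handed
   operator, \<partial>A\<^sub>2 = \<partial>B\<^sub>2 = 0 means that B\<^sub>1 and A\<^sub>1 are harmonic, and the system for
   (A\<^sub>2, B\<^sub>2) is the image under \<partial> of the one for (A\<^sub>1, B\<^sub>1). For the particular
   solutions, V \<mapsto> V - e\<^sub>1 V e\<^sub>1 turns right monogenic functions into solutions of the
   system because V \<mapsto> e\<^sub>1 V e\<^sub>1 is an involution. *)

section \<open>Equality of mixed partial derivatives\<close>

(* Both sides of Q1 s1 t1 = Q2 s2 t2 compute the second difference of h over the square
   [a, a + d] \<times> [b, b + d], by the mean value theorem in the two possible orders. *)
lemma mixed_difference_mvt:
  fixes h hs ht Q1 Q2 :: "real \<Rightarrow> real \<Rightarrow> real"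
  assumes hs: "\<And>s t. ((\<lambda>s. h s t) has_real_derivative hs s t) (at s)"
    and Q1: "\<And>s t. ((\<lambda>t. hs s t) has_real_derivative Q1 s t) (at t)"
    and ht: "\<And>s t. ((\<lambda>t. h s t) has_real_derivative ht s t) (at t)"
    and Q2: "\<And>s t. ((\<lambda>s. ht s t) has_real_derivative Q2 s t) (at s)"
    and d: "d > 0"
  shows "\<exists>s1 t1 s2 t2. a < s1 \<and> s1 < a + d \<and> b < t1 \<and> t1 < b + d \<and>
     a < s2 \<and> s2 < a + d \<and> b < t2 \<and> t2 < b + d \<and> Q1 s1 t1 = Q2 s2 t2"
proof -
  have ad: "a < a + d" and bd: "b < b + d" using d by auto
  obtain s1 where s1: "a < s1" "s1 < a + d"
    and e1: "(h (a+d) (b+d) - h (a+d) b) - (h a (b+d) - h a b)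
        = (a + d - a) * (hs s1 (b+d) - hs s1 b)"
  proof -
    have "\<And>x. ((\<lambda>s. h s (b+d) - h s b) has_real_derivative hs x (b+d) - hs x b) (at x)"
      by (intro DERIV_diff hs)
    from MVT2[OF ad, of "\<lambda>s. h s (b+d) - h s b", OF this] show ?thesis
      using that by auto
  qed
  obtain t1 where t1: "b < t1" "t1 < b + d"
    and e2: "hs s1 (b+d) - hs s1 b = (b + d - b) * Q1 s1 t1"
    using MVT2[OF bd, of "\<lambda>t. hs s1 t" "\<lambda>t. Q1 s1 t"] Q1 by auto
  obtain t2 where t2: "b < t2" "t2 < b + d"
    and e3: "(h (a+d) (b+d) - h a (b+d)) - (h (a+d) b - h a b)
        = (b + d - b) * (ht (a+d) t2 - ht a t2)"
  proof -
    have "\<And>x. ((\<lambda>t. h (a+d) t - h a t) has_real_derivative ht (a+d) x - ht a x) (at x)"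
      by (intro DERIV_diff ht)
    from MVT2[OF bd, of "\<lambda>t. h (a+d) t - h a t", OF this] show ?thesis
      using that by auto
  qed
  obtain s2 where s2: "a < s2" "s2 < a + d"
    and e4: "ht (a+d) t2 - ht a t2 = (a + d - a) * Q2 s2 t2"
    using MVT2[OF ad, of "\<lambda>s. ht s t2" "\<lambda>s. Q2 s t2"] Q2 by auto
  have "d * (d * Q1 s1 t1) = d * (d * Q2 s2 t2)"
    using e1 e2 e3 e4 by (simp add: algebra_simps)
  then have "Q1 s1 t1 = Q2 s2 t2" using d by simp
  then show ?thesis using s1 t1 s2 t2 by blast
qed

lemma mixed_derivatives_eq:
  fixes h hs ht Q1 Q2 :: "real \<Rightarrow> real \<Rightarrow> real"
  assumes hs: "\<And>s t. ((\<lambda>s. h s t) has_real_derivative hs s t) (at s)"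
    and Q1: "\<And>s t. ((\<lambda>t. hs s t) has_real_derivative Q1 s t) (at t)"
    and ht: "\<And>s t. ((\<lambda>t. h s t) has_real_derivative ht s t) (at t)"
    and Q2: "\<And>s t. ((\<lambda>s. ht s t) has_real_derivative Q2 s t) (at s)"
    and c1: "continuous_on UNIV (\<lambda>(s,t). Q1 s t)"
    and c2: "continuous_on UNIV (\<lambda>(s,t). Q2 s t)"
  shows "Q1 a b = Q2 a b"
proof (rule ccontr)
  assume ne: "Q1 a b \<noteq> Q2 a b"
  define e where "e = \<bar>Q1 a b - Q2 a b\<bar> / 2"
  have e: "e > 0" using ne by (simp add: e_def)
  obtain d1 where d1: "d1 > 0" "\<And>p. dist p (a,b) < d1 \<Longrightarrow> dist ((\<lambda>(s,t). Q1 s t) p) (Q1 a b) < e"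
    using c1 e unfolding continuous_on_iff by (metis UNIV_I case_prod_conv)
  obtain d2 where d2: "d2 > 0" "\<And>p. dist p (a,b) < d2 \<Longrightarrow> dist ((\<lambda>(s,t). Q2 s t) p) (Q2 a b) < e"
    using c2 e unfolding continuous_on_iff by (metis UNIV_I case_prod_conv)
  define d where "d = min d1 d2 / 2"
  have d: "d > 0" using d1 d2 by (simp add: d_def)
  obtain s1 t1 s2 t2 where st: "a < s1" "s1 < a + d" "b < t1" "t1 < b + d"
     "a < s2" "s2 < a + d" "b < t2" "t2 < b + d" and eq: "Q1 s1 t1 = Q2 s2 t2"
    using mixed_difference_mvt[OF hs Q1 ht Q2 d] by blast
  have near: "dist (s, t) (a, b) < min d1 d2" if "a < s" "s < a + d" "b < t" "t < b + d" for s t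
  proof -
    have "dist (s, t) (a, b) = sqrt ((s - a)\<^sup>2 + (t - b)\<^sup>2)"
      by (simp add: dist_Pair_Pair dist_real_def)
    also have "\<dots> \<le> \<bar>s - a\<bar> + \<bar>t - b\<bar>" by (rule sqrt_sum_squares_le_sum_abs)
    also have "\<dots> < min d1 d2"
    proof -
      have "d \<le> d1 / 2" "d \<le> d2 / 2" by (auto simp: d_def)
      then show ?thesis using that by simp
    qed
    finally show ?thesis .
  qed
  have "dist (Q1 s1 t1) (Q1 a b) < e" using d1(2)[of "(s1,t1)"] near[of s1 t1] st by auto
  moreover have "dist (Q2 s2 t2) (Q2 a b) < e" using d2(2)[of "(s2,t2)"] near[of s2 t2] st by auto
  ultimately show False using eq unfolding e_def dist_real_def
    by (simp add: abs_if split: if_splits)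
qed

lemma iter_pdr_has_real_derivative:
  assumes "smooth_real m g" "set js \<subseteq> {0..m}" "j \<le> m"
  shows "((\<lambda>t. iter_pdr js g (y(j:=t))) has_real_derivative iter_pdr (j#js) g y) (at (y j))"
proof -
  have "(\<lambda>t. iter_pdr js g (y(j:=t))) differentiable (at (y j))"
    using assms unfolding smooth_real_def by auto
  then show ?thesis
    by (simp add: pdr_def DERIV_deriv_iff_real_differentiable)
qed

lemma continuous_on_fun_upd_pair:
  "continuous_on UNIV (\<lambda>(s::real, t::real). (x::nat\<Rightarrow>real)(j:=s, k:=t))"
proof (rule continuous_on_coordinatewise_then_product)
  fix i
  show "continuous_on UNIV (\<lambda>p. (case p of (s::real, t::real) \<Rightarrow> x(j:=s, k:=t)) i)"
    by (cases "i = k"; cases "i = j")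
       (simp_all add: case_prod_unfold continuous_on_fst continuous_on_snd)
qed

lemma pdr_commute:
  assumes sm: "smooth_real m g" and jm: "j \<le> m" and km: "k \<le> m"
  shows "pdr j (pdr k g) x = pdr k (pdr j g) x"
proof (cases "j = k")
  case False
  define P where "P s t = x(j:=s, k:=t)" for s t
  have Pj: "(P s t)(j:=s') = P s' t" "P s t j = s" for s s' t
    using False by (auto simp: P_def fun_eq_iff)
  have Pk: "(P s t)(k:=t') = P s t'" "P s t k = t" for s t t'
    by (auto simp: P_def fun_eq_iff)
  have js: "set [] \<subseteq> {0..m}" "set [j] \<subseteq> {0..m}" "set [k] \<subseteq> {0..m}"
    "set [k,j] \<subseteq> {0..m}" "set [j,k] \<subseteq> {0..m}"
    using jm km by auto
  have cont: "continuous_on UNIV (\<lambda>(s, t). iter_pdr js g (P s t))" if "set js \<subseteq> {0..m}" for js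
  proof -
    have "continuous_on UNIV (iter_pdr js g)" using sm that unfolding smooth_real_def by blast
    then have "continuous_on UNIV (\<lambda>p. iter_pdr js g ((\<lambda>(s, t). P s t) p))"
      by (rule continuous_on_compose2[OF _ continuous_on_fun_upd_pair[of x j k, folded P_def]]) auto
    then show ?thesis by (simp add: case_prod_unfold)
  qed
  have hs: "((\<lambda>s. g (P s t)) has_real_derivative pdr j g (P s t)) (at s)" for s t
    using iter_pdr_has_real_derivative[OF sm js(1) jm, of "P s t"] by (simp add: Pj)
  have Q1: "((\<lambda>t. pdr j g (P s t)) has_real_derivative pdr k (pdr j g) (P s t)) (at t)" for s t
    using iter_pdr_has_real_derivative[OF sm js(2) km, of "P s t"] by (simp add: Pk)
  have ht: "((\<lambda>t. g (P s t)) has_real_derivative pdr k g (P s t)) (at t)" for s t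
    using iter_pdr_has_real_derivative[OF sm js(1) km, of "P s t"] by (simp add: Pk)
  have Q2: "((\<lambda>s. pdr k g (P s t)) has_real_derivative pdr j (pdr k g) (P s t)) (at s)" for s t
    using iter_pdr_has_real_derivative[OF sm js(3) jm, of "P s t"] by (simp add: Pj)
  have "pdr k (pdr j g) (P (x j) (x k)) = pdr j (pdr k g) (P (x j) (x k))"
    using mixed_derivatives_eq[OF hs Q1 ht Q2] cont[OF js(4)] cont[OF js(5)] by simp
  moreover have "P (x j) (x k) = x" by (simp add: P_def)
  ultimately show ?thesis by simp
qed simp

section \<open>The Clifford algebra as a real vector space\<close>

instantiation "fun" :: (type, real_vector) real_vector
begin
definition scaleR_fun :: "real \<Rightarrow> ('a \<Rightarrow> 'b) \<Rightarrow> 'a \<Rightarrow> 'b" where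
  "scaleR_fun r f = (\<lambda>x. r *\<^sub>R f x)"
instance by standard (simp_all add: scaleR_fun_def fun_eq_iff scaleR_add_right scaleR_add_left)
end

lemma scaleR_fun_apply [simp]: "(r *\<^sub>R f) x = r *\<^sub>R f x"
  by (simp add: scaleR_fun_def)

lemma sum_fun_apply: "(sum g S) x = sum (\<lambda>i. g i x) S"
  by (induction S rule: infinite_finite_induct) auto

lemma cl_add_eq: "cl_add a b = a + b" by (simp add: cl_add_def fun_eq_iff)
lemma cl_sub_eq: "cl_sub a b = a - b" by (simp add: cl_sub_def fun_eq_iff)
lemma cl_scale_eq: "cl_scale r a = r *\<^sub>R a" by (simp add: cl_scale_def fun_eq_iff)
lemma cl_zero_eq: "cl_zero = 0" by (simp add: cl_zero_def fun_eq_iff)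
lemma cl_sum_eq: "cl_sum S g = sum g S" by (simp add: cl_sum_def fun_eq_iff sum_fun_apply)
lemmas cl_ops_eq = cl_add_eq cl_sub_eq cl_scale_eq cl_zero_eq cl_sum_eq

lemma sym_diff_eq_iff: "sym_diff A B = C \<longleftrightarrow> B = sym_diff A C"
  by blast

lemma cl_mult_apply_sum_left:
  "cl_mult m u a C = (if C \<subseteq> {1..m} then
     (\<Sum>A\<in>Pow {1..m}. cl_sign A (sym_diff A C) * u A * a (sym_diff A C)) else 0)"
proof (cases "C \<subseteq> {1..m}")
  case True
  have "cl_mult m u a C = (\<Sum>A\<in>Pow {1..m}. \<Sum>B\<in>Pow {1..m}.
      if B = sym_diff A C then cl_sign A B * u A * a B else 0)"
    unfolding cl_mult_def by (simp add: sym_diff_eq_iff)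
  also have "\<dots> = (\<Sum>A\<in>Pow {1..m}. cl_sign A (sym_diff A C) * u A * a (sym_diff A C))"
  proof (rule sum.cong[OF refl])
    fix A assume "A \<in> Pow {1..m}"
    then have "sym_diff A C \<in> Pow {1..m}" using True by blast
    then show "(\<Sum>B\<in>Pow {1..m}. if B = sym_diff A C then cl_sign A B * u A * a B else 0) =
      cl_sign A (sym_diff A C) * u A * a (sym_diff A C)" by simp
  qed
  finally show ?thesis using True by simp
next
  case False
  have "sym_diff A B \<noteq> C" if "A \<in> Pow {1..m}" "B \<in> Pow {1..m}" for A B
    using that False by blast
  then have "cl_mult m u a C = 0"
    unfolding cl_mult_def by (intro sum.neutral ballI) simp
  with False show ?thesis by simp
qed

lemma cl_mult_apply_sum_right:
  "cl_mult m a u C = (if C \<subseteq> {1..m} then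
     (\<Sum>B\<in>Pow {1..m}. cl_sign (sym_diff B C) B * a (sym_diff B C) * u B) else 0)"
proof (cases "C \<subseteq> {1..m}")
  case True
  have "cl_mult m a u C = (\<Sum>B\<in>Pow {1..m}. \<Sum>A\<in>Pow {1..m}.
      if A = sym_diff B C then cl_sign A B * a A * u B else 0)"
    unfolding cl_mult_def by (subst sum.swap) (simp add: Un_commute sym_diff_eq_iff)
  also have "\<dots> = (\<Sum>B\<in>Pow {1..m}. cl_sign (sym_diff B C) B * a (sym_diff B C) * u B)"
  proof (rule sum.cong[OF refl])
    fix B assume "B \<in> Pow {1..m}"
    then have "sym_diff B C \<in> Pow {1..m}" using True by blast
    then show "(\<Sum>A\<in>Pow {1..m}. if A = sym_diff B C then cl_sign A B * a A * u B else 0) =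
      cl_sign (sym_diff B C) B * a (sym_diff B C) * u B" by simp
  qed
  finally show ?thesis using True by simp
next
  case False
  have "sym_diff A B \<noteq> C" if "A \<in> Pow {1..m}" "B \<in> Pow {1..m}" for A B
    using that False by blast
  then have "cl_mult m a u C = 0"
    unfolding cl_mult_def by (intro sum.neutral ballI) simp
  with False show ?thesis by simp
qed

lemma sum_delta_mult:
  "finite S \<Longrightarrow> (\<Sum>A\<in>S. (f A::real) * (if A = x then 1 else 0) * g A)
      = (if x \<in> S then f x * g x else 0)"
  by (simp add: if_distrib if_distribR sum.delta cong: if_cong)

lemma sum_mult_delta:
  "finite S \<Longrightarrow> (\<Sum>A\<in>S. (f A::real) * g A * (if A = x then 1 else 0))
      = (if x \<in> S then f x * g x else 0)"
  by (simp add: if_distrib if_distribR sum.delta cong: if_cong)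

definition lmul_e :: "nat \<Rightarrow> nat \<Rightarrow> cl \<Rightarrow> cl" where
  "lmul_e m j a = (\<lambda>C. if C \<subseteq> {1..m} then cl_sign {j} (sym_diff C {j}) * a (sym_diff C {j}) else 0)"

definition rmul_e :: "nat \<Rightarrow> nat \<Rightarrow> cl \<Rightarrow> cl" where
  "rmul_e m j a = (\<lambda>C. if C \<subseteq> {1..m} then cl_sign (sym_diff C {j}) {j} * a (sym_diff C {j}) else 0)"

lemma cl_mult_e_left: "j \<in> {1..m} \<Longrightarrow> cl_mult m (cl_e j) a = lmul_e m j a"
  unfolding lmul_e_def
  by (rule ext, subst cl_mult_apply_sum_left) (simp add: cl_e_def sum_delta_mult Un_commute)

lemma cl_mult_e_right: "j \<in> {1..m} \<Longrightarrow> cl_mult m a (cl_e j) = rmul_e m j a"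
  unfolding rmul_e_def
  by (rule ext, subst cl_mult_apply_sum_right) (simp add: cl_e_def sum_mult_delta Un_commute)

lemma cl_mult_of_complex:
  assumes "m \<ge> 1" "cl_in m a"
  shows "cl_mult m (cl_of_complex w) a = Re w *\<^sub>R a + Im w *\<^sub>R lmul_e m 1 a"
proof (rule ext)
  fix C
  have u: "cl_of_complex w A
      = Re w * (if A = {} then 1 else 0) + Im w * (if A = {1} then 1 else 0)" for A
    by (auto simp: cl_of_complex_def)
  have e: "(\<Sum>A\<in>Pow {1..m}. cl_sign A (sym_diff A C) * cl_of_complex w A * a (sym_diff A C)) =
     Re w * (\<Sum>A\<in>Pow {1..m}.
       cl_sign A (sym_diff A C) * (if A = {} then 1 else 0) * a (sym_diff A C)) +
     Im w * (\<Sum>A\<in>Pow {1..m}.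
       cl_sign A (sym_diff A C) * (if A = {1} then 1 else 0) * a (sym_diff A C))"
    by (simp add: u sum_distrib_left sum.distrib[symmetric] algebra_simps)
  have "cl_sign {} B = 1" for B by (simp add: cl_sign_def)
  then show "cl_mult m (cl_of_complex w) a C = (Re w *\<^sub>R a + Im w *\<^sub>R lmul_e m 1 a) C"
    using assms unfolding lmul_e_def
    by (subst cl_mult_apply_sum_left, subst e) (auto simp: sum_delta_mult Un_commute cl_in_def)
qed

lemma cl_sign_singleton_left:
  "cl_sign {j} B = (-1) ^ card {b\<in>B. b < j} * (if j \<in> B then -1 else 1)"
proof -
  have "{(a, b). a \<in> {j} \<and> b \<in> B \<and> b < a} = Pair j ` {b\<in>B. b < j}" by auto
  then have c: "card {(a, b). a \<in> {j} \<and> b \<in> B \<and> b < a} = card {b\<in>B. b < j}"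
    by (simp add: card_image inj_on_def)
  have "card ({j} \<inter> B) = (if j \<in> B then 1 else 0)" by auto
  then show ?thesis unfolding cl_sign_def c by (simp add: power_add)
qed

lemma cl_sign_singleton_right:
  "cl_sign B {j} = (-1) ^ card {a\<in>B. j < a} * (if j \<in> B then -1 else 1)"
proof -
  have "{(a, b). a \<in> B \<and> b \<in> {j} \<and> b < a} = (\<lambda>a. (a, j)) ` {a\<in>B. j < a}" by auto
  then have c: "card {(a, b). a \<in> B \<and> b \<in> {j} \<and> b < a} = card {a\<in>B. j < a}"
    by (simp add: card_image inj_on_def)
  have "card (B \<inter> {j}) = (if j \<in> B then 1 else 0)" by auto
  then show ?thesis unfolding cl_sign_def c by (simp add: power_add)
qed

lemma neg_one_power_card_sym_diff_singleton:
  assumes "finite B"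
  shows "(-1::real) ^ card {b \<in> sym_diff B {k}. P b}
      = (if P k then -1 else 1) * (-1) ^ card {b\<in>B. P b}"
proof (cases "k \<in> B")
  case True
  have e: "{b \<in> sym_diff B {k}. P b} = {b\<in>B. P b} - {k}" using True by auto
  have f: "finite {b\<in>B. P b}" using assms by simp
  show ?thesis
  proof (cases "P k")
    case True
    then have "card {b\<in>B. P b} = Suc (card ({b\<in>B. P b} - {k}))"
      using f \<open>k \<in> B\<close> card_Suc_Diff1[of "{b\<in>B. P b}" k] by simp
    then show ?thesis unfolding e using True by simp
  next
    case False
    then have "{b\<in>B. P b} - {k} = {b\<in>B. P b}" by auto
    then show ?thesis unfolding e using False by simp
  qed
next
  case False
  have e: "{b \<in> sym_diff B {k}. P b} = (if P k then insert k {b\<in>B. P b} else {b\<in>B. P b})"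
    using False by auto
  have f: "finite {b\<in>B. P b}" using assms by simp
  show ?thesis unfolding e using False f by simp
qed

lemma cl_sign_singleton_left_sym_diff:
  "finite B \<Longrightarrow> cl_sign {j} (sym_diff B {k}) =
   (if k < j then -1 else 1) * (if k = j then -1 else 1) * cl_sign {j} B"
  unfolding cl_sign_singleton_left by (subst neg_one_power_card_sym_diff_singleton) auto

lemma cl_sign_singleton_right_sym_diff:
  "finite B \<Longrightarrow> cl_sign (sym_diff B {k}) {j} =
   (if j < k then -1 else 1) * (if k = j then -1 else 1) * cl_sign B {j}"
  unfolding cl_sign_singleton_right by (subst neg_one_power_card_sym_diff_singleton) auto

lemma cl_sign_square: "cl_sign A B * cl_sign A B = 1"
  unfolding cl_sign_def by (simp add: power_mult_distrib[symmetric])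

lemma lmul_e_lmul_e_same:
  assumes "j \<in> {1..m}" "cl_in m a" shows "lmul_e m j (lmul_e m j a) = - a"
proof (rule ext)
  fix C show "lmul_e m j (lmul_e m j a) C = (- a) C"
  proof (cases "C \<subseteq> {1..m}")
    case True
    then have "finite C" by (rule finite_subset) simp
    moreover have "sym_diff C {j} \<subseteq> {1..m}" using True assms(1) by blast
    moreover have "sym_diff (sym_diff C {j}) {j} = C" by blast
    ultimately show ?thesis
      using True by (simp add: lmul_e_def cl_sign_singleton_left_sym_diff cl_sign_square)
  next
    case False then show ?thesis using assms by (simp add: lmul_e_def cl_in_def)
  qed
qed

lemma rmul_e_rmul_e_same:
  assumes "j \<in> {1..m}" "cl_in m a" shows "rmul_e m j (rmul_e m j a) = - a"
proof (rule ext)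
  fix C show "rmul_e m j (rmul_e m j a) C = (- a) C"
  proof (cases "C \<subseteq> {1..m}")
    case True
    then have "finite C" by (rule finite_subset) simp
    moreover have "sym_diff C {j} \<subseteq> {1..m}" using True assms(1) by blast
    moreover have "sym_diff (sym_diff C {j}) {j} = C" by blast
    ultimately show ?thesis
      using True by (simp add: rmul_e_def cl_sign_singleton_right_sym_diff cl_sign_square)
  next
    case False then show ?thesis using assms by (simp add: rmul_e_def cl_in_def)
  qed
qed

lemma sym_diff_singletons_commute: "sym_diff (sym_diff C {j}) {k} = sym_diff (sym_diff C {k}) {j}"
  by blast

lemma lmul_e_anticommute:
  assumes "j \<in> {1..m}" "k \<in> {1..m}" "j \<noteq> k"
  shows "lmul_e m j (lmul_e m k a) = - lmul_e m k (lmul_e m j a)"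
proof (rule ext)
  fix C show "lmul_e m j (lmul_e m k a) C = (- lmul_e m k (lmul_e m j a)) C"
  proof (cases "C \<subseteq> {1..m}")
    case True
    then have "finite C" by (rule finite_subset) simp
    moreover have "sym_diff C {j} \<subseteq> {1..m}" "sym_diff C {k} \<subseteq> {1..m}" using True assms by blast+
    ultimately show ?thesis using True assms
      by (simp add: lmul_e_def cl_sign_singleton_left_sym_diff
          sym_diff_singletons_commute[of C j k])
  next
    case False then show ?thesis by (simp add: lmul_e_def)
  qed
qed

lemma rmul_e_anticommute:
  assumes "j \<in> {1..m}" "k \<in> {1..m}" "j \<noteq> k"
  shows "rmul_e m j (rmul_e m k a) = - rmul_e m k (rmul_e m j a)"
proof (rule ext)
  fix C show "rmul_e m j (rmul_e m k a) C = (- rmul_e m k (rmul_e m j a)) C"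
  proof (cases "C \<subseteq> {1..m}")
    case True
    then have "finite C" by (rule finite_subset) simp
    moreover have "sym_diff C {j} \<subseteq> {1..m}" "sym_diff C {k} \<subseteq> {1..m}" using True assms by blast+
    ultimately show ?thesis using True assms
      by (simp add: rmul_e_def cl_sign_singleton_right_sym_diff
          sym_diff_singletons_commute[of C j k])
  next
    case False then show ?thesis by (simp add: rmul_e_def)
  qed
qed

lemma lmul_rmul_e_commute:
  assumes "j \<in> {1..m}" "k \<in> {1..m}"
  shows "lmul_e m j (rmul_e m k a) = rmul_e m k (lmul_e m j a)"
proof (rule ext)
  fix C show "lmul_e m j (rmul_e m k a) C = rmul_e m k (lmul_e m j a) C"
  proof (cases "C \<subseteq> {1..m}")
    case True
    then have "finite C" by (rule finite_subset) simp
    moreover have "sym_diff C {j} \<subseteq> {1..m}" "sym_diff C {k} \<subseteq> {1..m}" using True assms by blast+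
    ultimately show ?thesis using True assms
      by (simp add: lmul_e_def rmul_e_def cl_sign_singleton_left_sym_diff
          cl_sign_singleton_right_sym_diff sym_diff_singletons_commute[of C j k])
  next
    case False then show ?thesis by (simp add: lmul_e_def rmul_e_def)
  qed
qed

lemma lmul_e_add: "lmul_e m k (a + b) = lmul_e m k a + lmul_e m k b"
  by (simp add: lmul_e_def fun_eq_iff algebra_simps)
lemma lmul_e_diff: "lmul_e m k (a - b) = lmul_e m k a - lmul_e m k b"
  by (simp add: lmul_e_def fun_eq_iff algebra_simps)
lemma lmul_e_minus: "lmul_e m k (- a) = - lmul_e m k a"
  by (simp add: lmul_e_def fun_eq_iff)
lemma lmul_e_scaleR: "lmul_e m k (r *\<^sub>R a) = r *\<^sub>R lmul_e m k a"
  by (simp add: lmul_e_def fun_eq_iff algebra_simps)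
lemma lmul_e_zero: "lmul_e m k 0 = 0"
  by (simp add: lmul_e_def fun_eq_iff)
lemma lmul_e_sum: "lmul_e m k (sum g S) = (\<Sum>i\<in>S. lmul_e m k (g i))"
  by (auto simp: fun_eq_iff lmul_e_def sum_fun_apply sum_distrib_left)

lemma rmul_e_add: "rmul_e m k (a + b) = rmul_e m k a + rmul_e m k b"
  by (simp add: rmul_e_def fun_eq_iff algebra_simps)
lemma rmul_e_diff: "rmul_e m k (a - b) = rmul_e m k a - rmul_e m k b"
  by (simp add: rmul_e_def fun_eq_iff algebra_simps)
lemma rmul_e_minus: "rmul_e m k (- a) = - rmul_e m k a"
  by (simp add: rmul_e_def fun_eq_iff)
lemma rmul_e_scaleR: "rmul_e m k (r *\<^sub>R a) = r *\<^sub>R rmul_e m k a"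
  by (simp add: rmul_e_def fun_eq_iff algebra_simps)
lemma rmul_e_zero: "rmul_e m k 0 = 0"
  by (simp add: rmul_e_def fun_eq_iff)
lemma rmul_e_sum: "rmul_e m k (sum g S) = (\<Sum>i\<in>S. rmul_e m k (g i))"
  by (auto simp: fun_eq_iff rmul_e_def sum_fun_apply sum_distrib_left)

lemma cl_in_lmul_e: "cl_in m (lmul_e m k a)" by (simp add: cl_in_def lmul_e_def)
lemma cl_in_rmul_e: "cl_in m (rmul_e m k a)" by (simp add: cl_in_def rmul_e_def)
lemma cl_in_add: "cl_in m a \<Longrightarrow> cl_in m b \<Longrightarrow> cl_in m (a + b)" by (simp add: cl_in_def)
lemma cl_in_diff: "cl_in m a \<Longrightarrow> cl_in m b \<Longrightarrow> cl_in m (a - b)" by (simp add: cl_in_def)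
lemma cl_in_scaleR: "cl_in m a \<Longrightarrow> cl_in m (r *\<^sub>R a)" by (simp add: cl_in_def)
lemma cl_in_zero: "cl_in m 0" by (simp add: cl_in_def)
lemma cl_in_sum: "(\<And>i. i \<in> S \<Longrightarrow> cl_in m (g i)) \<Longrightarrow> cl_in m (sum g S)"
  by (simp add: cl_in_def sum_fun_apply)
lemmas cl_in_intros = cl_in_lmul_e cl_in_rmul_e cl_in_add cl_in_diff cl_in_scaleR
  cl_in_zero cl_in_sum

lemma lmul_e_eq_0_iff:
  assumes "j \<in> {1..m}" "cl_in m a" shows "lmul_e m j a = 0 \<longleftrightarrow> a = 0"
  using lmul_e_lmul_e_same[OF assms] by (auto simp: lmul_e_zero)

section \<open>Partial derivatives\<close>

definition partially_differentiable :: "nat \<Rightarrow> (pt \<Rightarrow> cl) \<Rightarrow> bool" where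
  "partially_differentiable m f \<longleftrightarrow>
     (\<forall>j\<le>m. \<forall>x C. (\<lambda>t. f (x(j:=t)) C) differentiable (at (x j)))"

lemma pd_apply: "pd j f x C = deriv (\<lambda>t. f (x(j:=t)) C) (x j)"
  by (simp add: pd_def pdr_def)

lemma has_real_derivative_pd:
  "partially_differentiable m f \<Longrightarrow> j \<le> m \<Longrightarrow>
   ((\<lambda>t. f (x(j:=t)) C) has_real_derivative pd j f x C) (at (x j))"
  unfolding partially_differentiable_def pd_apply by (simp add: DERIV_deriv_iff_real_differentiable)

lemma pd_eqI:
  "(\<And>C. ((\<lambda>t. f (x(j:=t)) C) has_real_derivative D C) (at (x j))) \<Longrightarrow> pd j f x = D"
  unfolding pd_apply by (rule ext) (rule DERIV_imp_deriv)

lemma pd_cong_line: "(\<And>t. f (x(j:=t)) = g (x(j:=t))) \<Longrightarrow> pd j f x = pd j g x"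
  unfolding pd_apply by simp

lemma pd_zero: "pd j (\<lambda>x. 0) x = 0"
  by (rule pd_eqI) simp

context
  fixes m :: nat and f g :: "pt \<Rightarrow> cl"
  assumes f: "partially_differentiable m f"
begin

lemma pd_scaleR: "j \<le> m \<Longrightarrow> pd j (\<lambda>x. r *\<^sub>R f x) x = r *\<^sub>R pd j f x"
  by (rule pd_eqI) (simp add: DERIV_cmult has_real_derivative_pd[OF f])

lemma pd_lmul_e: "j \<le> m \<Longrightarrow> pd j (\<lambda>x. lmul_e m k (f x)) x = lmul_e m k (pd j f x)"
  by (rule pd_eqI) (simp add: lmul_e_def DERIV_cmult has_real_derivative_pd[OF f])

lemma pd_rmul_e: "j \<le> m \<Longrightarrow> pd j (\<lambda>x. rmul_e m k (f x)) x = rmul_e m k (pd j f x)"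
  by (rule pd_eqI) (simp add: rmul_e_def DERIV_cmult has_real_derivative_pd[OF f])

context
  assumes g: "partially_differentiable m g"
begin

lemma pd_add: "j \<le> m \<Longrightarrow> pd j (\<lambda>x. f x + g x) x = pd j f x + pd j g x"
  by (rule pd_eqI) (simp add: DERIV_add has_real_derivative_pd[OF f] has_real_derivative_pd[OF g])

lemma pd_diff: "j \<le> m \<Longrightarrow> pd j (\<lambda>x. f x - g x) x = pd j f x - pd j g x"
  by (rule pd_eqI) (simp add: DERIV_diff has_real_derivative_pd[OF f] has_real_derivative_pd[OF g])

end

end

lemma partially_differentiable_add:
  "partially_differentiable m f \<Longrightarrow> partially_differentiable m g \<Longrightarrow>
   partially_differentiable m (\<lambda>x. f x + g x)"
  unfolding partially_differentiable_def by simp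

lemma partially_differentiable_diff:
  "partially_differentiable m f \<Longrightarrow> partially_differentiable m g \<Longrightarrow>
   partially_differentiable m (\<lambda>x. f x - g x)"
  unfolding partially_differentiable_def by simp

lemma partially_differentiable_scaleR:
  "partially_differentiable m f \<Longrightarrow> partially_differentiable m (\<lambda>x. r *\<^sub>R f x)"
  unfolding partially_differentiable_def by simp

lemma partially_differentiable_zero: "partially_differentiable m (\<lambda>x. 0)"
  unfolding partially_differentiable_def by simp

lemma partially_differentiable_lmul_e:
  assumes "partially_differentiable m f" shows "partially_differentiable m (\<lambda>x. lmul_e m k (f x))"
  unfolding partially_differentiable_def
proof (intro allI impI)
  fix j x C assume "j \<le> m"
  then show "(\<lambda>t. lmul_e m k (f (x(j := t))) C) differentiable at (x j)"
    using assms unfolding partially_differentiable_def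
      by (cases "C \<subseteq> {1..m}") (simp_all add: lmul_e_def)
qed

lemma partially_differentiable_rmul_e:
  assumes "partially_differentiable m f" shows "partially_differentiable m (\<lambda>x. rmul_e m k (f x))"
  unfolding partially_differentiable_def
proof (intro allI impI)
  fix j x C assume "j \<le> m"
  then show "(\<lambda>t. rmul_e m k (f (x(j := t))) C) differentiable at (x j)"
    using assms unfolding partially_differentiable_def
      by (cases "C \<subseteq> {1..m}") (simp_all add: rmul_e_def)
qed

lemma partially_differentiable_sum:
  "finite S \<Longrightarrow> (\<And>i. i \<in> S \<Longrightarrow> partially_differentiable m (f i)) \<Longrightarrow>
   partially_differentiable m (\<lambda>x. \<Sum>i\<in>S. f i x)"
  by (induction S rule: finite_induct)
     (simp_all add: partially_differentiable_zero partially_differentiable_add)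

lemma pd_sum:
  assumes "finite S" "\<And>i. i \<in> S \<Longrightarrow> partially_differentiable m (f i)" "j \<le> m"
  shows "pd j (\<lambda>x. \<Sum>i\<in>S. f i x) x = (\<Sum>i\<in>S. pd j (f i) x)"
  using assms
proof (induction S rule: finite_induct)
  case empty show ?case by (rule pd_eqI) simp
next
  case (insert a S)
  have "pd j (\<lambda>x. \<Sum>i\<in>insert a S. f i x) x = pd j (\<lambda>x. f a x + (\<Sum>i\<in>S. f i x)) x"
    by (simp only: sum.insert[OF insert(1,2)])
  also have "\<dots> = pd j (f a) x + pd j (\<lambda>x. \<Sum>i\<in>S. f i x) x"
    using insert by (intro pd_add partially_differentiable_sum) auto
  also have "\<dots> = (\<Sum>i\<in>insert a S. pd j (f i) x)"
    using insert by (simp only: sum.insert[OF insert(1,2)]) simp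
  finally show ?case .
qed

lemma smooth_cl_partially_differentiable:
  assumes "smooth_cl m f" shows "partially_differentiable m f"
  unfolding partially_differentiable_def
proof (intro allI impI)
  fix j x C assume "j \<le> m"
  moreover have "smooth_real m (\<lambda>y. f y C)" using assms smooth_cl_def by blast
  moreover have "set [] \<subseteq> {0..m}" by simp
  ultimately show "(\<lambda>t. f (x(j := t)) C) differentiable at (x j)"
    unfolding smooth_real_def by fastforce
qed

lemma partially_differentiable_pd:
  assumes "smooth_cl m f" "k \<le> m" shows "partially_differentiable m (pd k f)"
  unfolding partially_differentiable_def
proof (intro allI impI)
  fix j x C assume j: "j \<le> m"
  have "smooth_real m (\<lambda>y. f y C)" using assms smooth_cl_def by blast
  moreover have "set [k] \<subseteq> {0..m}" using assms(2) by simp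
  ultimately have
      "\<forall>j\<in>{0..m}. \<forall>x. (\<lambda>t. iter_pdr [k] (\<lambda>y. f y C) (x(j:=t))) differentiable (at (x j))"
    unfolding smooth_real_def by blast
  then show "(\<lambda>t. pd k f (x(j := t)) C) differentiable at (x j)" using j by (simp add: pd_def)
qed

lemma pd_commute:
  assumes "smooth_cl m f" "j \<le> m" "k \<le> m"
  shows "pd j (pd k f) x = pd k (pd j f) x"
proof (rule ext)
  fix C
  have "smooth_real m (\<lambda>y. f y C)" using assms(1) by (simp add: smooth_cl_def)
  from pdr_commute[OF this assms(2,3)] show "pd j (pd k f) x C = pd k (pd j f) x C"
    by (simp add: pd_def)
qed

lemma smooth_cl_in: "smooth_cl m f \<Longrightarrow> cl_in m (f x)"
  by (simp add: smooth_cl_def)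

lemma cl_in_pd: "(\<And>x. cl_in m (f x)) \<Longrightarrow> cl_in m (pd j f x)"
  unfolding cl_in_def pd_apply by simp

section \<open>Functions of \<open>y\<close> only\<close>

lemma depends_only_on_yI:
  "(\<And>x x'. (\<forall>j\<in>{2..m}. x j = x' j) \<Longrightarrow> f x = f x') \<Longrightarrow> depends_only_on_y m f"
  unfolding depends_only_on_y_def by blast

lemma depends_only_on_y_fun_upd:
  "depends_only_on_y m f \<Longrightarrow> j \<notin> {2..m} \<Longrightarrow> f (x(j:=t)) = f x"
  unfolding depends_only_on_y_def by auto

lemma depends_only_on_y_fun_upd_01:
  "depends_only_on_y m f \<Longrightarrow> f (x(0:=s, Suc 0:=t)) = f x"
  unfolding depends_only_on_y_def by auto

lemma pd_eq_0_if_depends_only_on_y: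
  "depends_only_on_y m f \<Longrightarrow> j \<notin> {2..m} \<Longrightarrow> pd j f x = 0"
  by (rule pd_eqI) (simp add: depends_only_on_y_fun_upd)

lemma depends_only_on_y_pd:
  assumes "depends_only_on_y m f" shows "depends_only_on_y m (pd j f)"
proof (rule depends_only_on_yI)
  fix x x' :: pt assume a: "\<forall>j\<in>{2..m}. x j = x' j"
  show "pd j f x = pd j f x'"
  proof (cases "j \<in> {2..m}")
    case True
    have "f (x(j:=t)) = f (x'(j:=t))" for t
      using assms a unfolding depends_only_on_y_def by auto
    then show ?thesis using True a by (simp add: pd_def pdr_def)
  next
    case False then show ?thesis using assms by (simp add: pd_eq_0_if_depends_only_on_y)
  qed
qed

lemma depends_only_on_y_add:
  "depends_only_on_y m f \<Longrightarrow> depends_only_on_y m g \<Longrightarrow> depends_only_on_y m (\<lambda>x. f x + g x)"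
  unfolding depends_only_on_y_def by metis

lemma depends_only_on_y_diff:
  "depends_only_on_y m f \<Longrightarrow> depends_only_on_y m g \<Longrightarrow> depends_only_on_y m (\<lambda>x. f x - g x)"
  unfolding depends_only_on_y_def by metis

lemma depends_only_on_y_scaleR:
  "depends_only_on_y m f \<Longrightarrow> depends_only_on_y m (\<lambda>x. r *\<^sub>R f x)"
  unfolding depends_only_on_y_def by metis

lemma depends_only_on_y_lmul_e:
  "depends_only_on_y m f \<Longrightarrow> depends_only_on_y m (\<lambda>x. lmul_e m k (f x))"
  unfolding depends_only_on_y_def by metis

lemma depends_only_on_y_rmul_e:
  "depends_only_on_y m f \<Longrightarrow> depends_only_on_y m (\<lambda>x. rmul_e m k (f x))"
  unfolding depends_only_on_y_def by metis

section \<open>Dirac operators\<close>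

lemma dY_left_eq: "dY_left m f x = (\<Sum>j\<in>{2..m}. lmul_e m j (pd j f x))"
  unfolding dY_left_def cl_sum_eq by (rule sum.cong) (auto simp: cl_mult_e_left)

lemma dY_right_eq: "dY_right m f x = (\<Sum>j\<in>{2..m}. rmul_e m j (pd j f x))"
  unfolding dY_right_def cl_sum_eq by (rule sum.cong) (auto simp: cl_mult_e_right)

lemma lap_y_eq: "lap_y m f x = (\<Sum>j\<in>{2..m}. pd j (pd j f) x)"
  by (simp add: lap_y_def cl_sum_eq)

lemma sum_atLeastAtMost_1_split: "(m::nat) \<ge> 1 \<Longrightarrow> (\<Sum>j\<in>{1..m}. g j) = g 1 + (\<Sum>j\<in>{2..m}. g j)"
  by (simp add: sum.atLeast_Suc_atMost numeral_2_eq_2)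

lemma dX_left_eq:
  assumes "m \<ge> 1" shows "dX_left m f x = pd 0 f x + lmul_e m 1 (pd 1 f x) + dY_left m f x"
proof -
  have "(\<Sum>j\<in>{1..m}. cl_mult m (cl_e j) (pd j f x)) = (\<Sum>j\<in>{1..m}. lmul_e m j (pd j f x))"
    by (rule sum.cong) (auto simp: cl_mult_e_left)
  then show ?thesis unfolding dX_left_def dY_left_eq cl_ops_eq
    by (simp only: sum_atLeastAtMost_1_split[OF assms] add.assoc)
qed

lemma dX_right_eq:
  assumes "m \<ge> 1" shows "dX_right m f x = pd 0 f x + rmul_e m 1 (pd 1 f x) + dY_right m f x"
proof -
  have "(\<Sum>j\<in>{1..m}. cl_mult m (pd j f x) (cl_e j)) = (\<Sum>j\<in>{1..m}. rmul_e m j (pd j f x))"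
    by (rule sum.cong) (auto simp: cl_mult_e_right)
  then show ?thesis unfolding dX_right_def dY_right_eq cl_ops_eq
    by (simp only: sum_atLeastAtMost_1_split[OF assms] add.assoc)
qed

lemma cl_in_dY_left: "cl_in m (dY_left m f x)"
  unfolding dY_left_eq by (intro cl_in_sum cl_in_lmul_e)

lemma cl_in_dY_right: "cl_in m (dY_right m f x)"
  unfolding dY_right_eq by (intro cl_in_sum cl_in_rmul_e)

lemma depends_only_on_y_dY_left:
  assumes "depends_only_on_y m f" shows "depends_only_on_y m (dY_left m f)"
proof (rule depends_only_on_yI)
  fix x x' :: pt assume "\<forall>j\<in>{2..m}. x j = x' j"
  then have "pd j f x = pd j f x'" for j
    using depends_only_on_y_pd[OF assms] unfolding depends_only_on_y_def by blast
  then show "dY_left m f x = dY_left m f x'" by (simp add: dY_left_eq)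
qed

lemma depends_only_on_y_dY_right:
  assumes "depends_only_on_y m f" shows "depends_only_on_y m (dY_right m f)"
proof (rule depends_only_on_yI)
  fix x x' :: pt assume "\<forall>j\<in>{2..m}. x j = x' j"
  then have "pd j f x = pd j f x'" for j
    using depends_only_on_y_pd[OF assms] unfolding depends_only_on_y_def by blast
  then show "dY_right m f x = dY_right m f x'" by (simp add: dY_right_eq)
qed

lemmas depends_only_on_y_intros = depends_only_on_y_add depends_only_on_y_diff
  depends_only_on_y_scaleR depends_only_on_y_lmul_e depends_only_on_y_rmul_e
  depends_only_on_y_dY_left depends_only_on_y_dY_right

lemma partially_differentiable_dY_left:
  "smooth_cl m f \<Longrightarrow> partially_differentiable m (dY_left m f)"
  unfolding dY_left_eq[abs_def]
  by (intro partially_differentiable_sum partially_differentiable_lmul_e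
      partially_differentiable_pd) auto

lemma partially_differentiable_dY_right:
  "smooth_cl m f \<Longrightarrow> partially_differentiable m (dY_right m f)"
  unfolding dY_right_eq[abs_def]
  by (intro partially_differentiable_sum partially_differentiable_rmul_e
      partially_differentiable_pd) auto

context
  fixes m :: nat and f g :: "pt \<Rightarrow> cl"
  assumes f: "partially_differentiable m f"
begin

lemma dY_left_scaleR: "dY_left m (\<lambda>x. r *\<^sub>R f x) x = r *\<^sub>R dY_left m f x"
  unfolding dY_left_eq by (simp add: pd_scaleR[OF f] lmul_e_scaleR scaleR_sum_right)

lemma dY_right_scaleR: "dY_right m (\<lambda>x. r *\<^sub>R f x) x = r *\<^sub>R dY_right m f x"
  unfolding dY_right_eq by (simp add: pd_scaleR[OF f] rmul_e_scaleR scaleR_sum_right)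

context
  assumes m2: "m \<ge> 2"
begin

lemma dY_left_lmul_e1: "dY_left m (\<lambda>x. lmul_e m 1 (f x)) x = - lmul_e m 1 (dY_left m f x)"
proof -
  have "lmul_e m j (pd j (\<lambda>x. lmul_e m 1 (f x)) x) = - lmul_e m 1 (lmul_e m j (pd j f x))"
    if "j \<in> {2..m}" for j
    using that m2 lmul_e_anticommute[of j m 1] by (simp add: pd_lmul_e[OF f])
  then show ?thesis unfolding dY_left_eq by (simp add: lmul_e_sum sum_negf)
qed

lemma dY_left_rmul_e1: "dY_left m (\<lambda>x. rmul_e m 1 (f x)) x = rmul_e m 1 (dY_left m f x)"
proof -
  have "lmul_e m j (pd j (\<lambda>x. rmul_e m 1 (f x)) x) = rmul_e m 1 (lmul_e m j (pd j f x))"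
    if "j \<in> {2..m}" for j
    using that m2 lmul_rmul_e_commute[of j m 1] by (simp add: pd_rmul_e[OF f])
  then show ?thesis unfolding dY_left_eq by (simp add: rmul_e_sum)
qed

lemma dY_right_lmul_e1: "dY_right m (\<lambda>x. lmul_e m 1 (f x)) x = lmul_e m 1 (dY_right m f x)"
proof -
  have "rmul_e m j (pd j (\<lambda>x. lmul_e m 1 (f x)) x) = lmul_e m 1 (rmul_e m j (pd j f x))"
    if "j \<in> {2..m}" for j
    using that m2 lmul_rmul_e_commute[of 1 m j] by (simp add: pd_lmul_e[OF f])
  then show ?thesis unfolding dY_right_eq by (simp add: lmul_e_sum)
qed

lemma dY_right_rmul_e1: "dY_right m (\<lambda>x. rmul_e m 1 (f x)) x = - rmul_e m 1 (dY_right m f x)"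
proof -
  have "rmul_e m j (pd j (\<lambda>x. rmul_e m 1 (f x)) x) = - rmul_e m 1 (rmul_e m j (pd j f x))"
    if "j \<in> {2..m}" for j
    using that m2 rmul_e_anticommute[of j m 1] by (simp add: pd_rmul_e[OF f])
  then show ?thesis unfolding dY_right_eq by (simp add: rmul_e_sum sum_negf)
qed

end

context
  assumes g: "partially_differentiable m g"
begin

lemma dY_left_add: "dY_left m (\<lambda>x. f x + g x) x = dY_left m f x + dY_left m g x"
  unfolding dY_left_eq by (simp add: pd_add[OF f g] lmul_e_add sum.distrib)

lemma dY_left_diff: "dY_left m (\<lambda>x. f x - g x) x = dY_left m f x - dY_left m g x"
  unfolding dY_left_eq by (simp add: pd_diff[OF f g] lmul_e_diff sum_subtractf)

lemma dY_right_add: "dY_right m (\<lambda>x. f x + g x) x = dY_right m f x + dY_right m g x"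
  unfolding dY_right_eq by (simp add: pd_add[OF f g] rmul_e_add sum.distrib)

lemma dY_right_diff: "dY_right m (\<lambda>x. f x - g x) x = dY_right m f x - dY_right m g x"
  unfolding dY_right_eq by (simp add: pd_diff[OF f g] rmul_e_diff sum_subtractf)

end

end

lemma sum_sum_antisymmetric:
  fixes X :: "'i \<Rightarrow> 'i \<Rightarrow> 'a::real_vector"
  assumes "finite S" and anti: "\<And>j k. j \<in> S \<Longrightarrow> k \<in> S \<Longrightarrow> j \<noteq> k \<Longrightarrow> X j k = - X k j"
  shows "(\<Sum>j\<in>S. \<Sum>k\<in>S. X j k) = (\<Sum>j\<in>S. X j j)"
proof -
  let ?T = "\<Sum>j\<in>S. \<Sum>k\<in>S. X j k"
  have swap: "?T = (\<Sum>j\<in>S. \<Sum>k\<in>S. X k j)" by (rule sum.swap)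
  have "?T + ?T = (\<Sum>j\<in>S. \<Sum>k\<in>S. X j k + X k j)"
    by (subst (2) swap) (simp only: sum.distrib)
  also have "\<dots> = (\<Sum>j\<in>S. \<Sum>k\<in>S. if k = j then X j j + X j j else 0)"
  proof (intro sum.cong refl)
    fix j k assume "j \<in> S" "k \<in> S"
    then show "X j k + X k j = (if k = j then X j j + X j j else 0)"
      using anti[of j k] by (cases "k = j") simp_all
  qed
  also have "\<dots> = (\<Sum>j\<in>S. X j j) + (\<Sum>j\<in>S. X j j)"
    using assms(1) by (simp add: sum.delta sum.distrib)
  finally have "2 *\<^sub>R ?T = 2 *\<^sub>R (\<Sum>j\<in>S. X j j)" by (simp add: scaleR_2)
  then show ?thesis by simp
qed

context
  fixes m :: nat and V :: "pt \<Rightarrow> cl"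
  assumes V: "smooth_cl m V"
begin

lemma pd_dY_left:
  assumes "j \<le> m" shows "pd j (dY_left m V) x = (\<Sum>k\<in>{2..m}. lmul_e m k (pd j (pd k V) x))"
proof -
  have "pd j (dY_left m V) x = (\<Sum>k\<in>{2..m}. pd j (\<lambda>y. lmul_e m k (pd k V y)) x)"
    unfolding dY_left_eq[abs_def] using assms
    by (intro pd_sum)
        (auto intro: partially_differentiable_lmul_e partially_differentiable_pd[OF V])
  also have "\<dots> = (\<Sum>k\<in>{2..m}. lmul_e m k (pd j (pd k V) x))"
    using assms by (intro sum.cong refl pd_lmul_e partially_differentiable_pd[OF V]) auto
  finally show ?thesis .
qed

lemma pd_dY_right:
  assumes "j \<le> m" shows "pd j (dY_right m V) x = (\<Sum>k\<in>{2..m}. rmul_e m k (pd j (pd k V) x))"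
proof -
  have "pd j (dY_right m V) x = (\<Sum>k\<in>{2..m}. pd j (\<lambda>y. rmul_e m k (pd k V y)) x)"
    unfolding dY_right_eq[abs_def] using assms
    by (intro pd_sum)
        (auto intro: partially_differentiable_rmul_e partially_differentiable_pd[OF V])
  also have "\<dots> = (\<Sum>k\<in>{2..m}. rmul_e m k (pd j (pd k V) x))"
    using assms by (intro sum.cong refl pd_rmul_e partially_differentiable_pd[OF V]) auto
  finally show ?thesis .
qed

lemma dY_left_dY_left: "dY_left m (dY_left m V) x = - lap_y m V x"
proof -
  have "dY_left m (dY_left m V) x
      = (\<Sum>j\<in>{2..m}. \<Sum>k\<in>{2..m}. lmul_e m j (lmul_e m k (pd j (pd k V) x)))"
    unfolding dY_left_eq[of m "dY_left m V"]
      by (intro sum.cong refl) (simp add: pd_dY_left lmul_e_sum)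
  also have "\<dots> = (\<Sum>j\<in>{2..m}. lmul_e m j (lmul_e m j (pd j (pd j V) x)))"
  proof (rule sum_sum_antisymmetric)
    fix j k assume "j \<in> {2..m}" "k \<in> {2..m}" "j \<noteq> k"
    then show "lmul_e m j (lmul_e m k (pd j (pd k V) x))
        = - lmul_e m k (lmul_e m j (pd k (pd j V) x))"
      using lmul_e_anticommute[of j m k] pd_commute[OF V, of j k x] by simp
  qed simp
  also have "\<dots> = (\<Sum>j\<in>{2..m}. - pd j (pd j V) x)"
    using V by (intro sum.cong refl lmul_e_lmul_e_same cl_in_pd) (auto simp: smooth_cl_def)
  finally show ?thesis by (simp add: lap_y_eq sum_negf)
qed

lemma dY_right_dY_right: "dY_right m (dY_right m V) x = - lap_y m V x"
proof -
  have "dY_right m (dY_right m V) x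
      = (\<Sum>j\<in>{2..m}. \<Sum>k\<in>{2..m}. rmul_e m j (rmul_e m k (pd j (pd k V) x)))"
    unfolding dY_right_eq[of m "dY_right m V"]
      by (intro sum.cong refl) (simp add: pd_dY_right rmul_e_sum)
  also have "\<dots> = (\<Sum>j\<in>{2..m}. rmul_e m j (rmul_e m j (pd j (pd j V) x)))"
  proof (rule sum_sum_antisymmetric)
    fix j k assume "j \<in> {2..m}" "k \<in> {2..m}" "j \<noteq> k"
    then show "rmul_e m j (rmul_e m k (pd j (pd k V) x))
        = - rmul_e m k (rmul_e m j (pd k (pd j V) x))"
      using rmul_e_anticommute[of j m k] pd_commute[OF V, of j k x] by simp
  qed simp
  also have "\<dots> = (\<Sum>j\<in>{2..m}. - pd j (pd j V) x)"
    using V by (intro sum.cong refl rmul_e_rmul_e_same cl_in_pd) (auto simp: smooth_cl_def)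
  finally show ?thesis by (simp add: lap_y_eq sum_negf)
qed

lemma dY_left_dY_right_commute: "dY_left m (dY_right m V) x = dY_right m (dY_left m V) x"
proof -
  have "dY_left m (dY_right m V) x
      = (\<Sum>j\<in>{2..m}. \<Sum>k\<in>{2..m}. lmul_e m j (rmul_e m k (pd j (pd k V) x)))"
    unfolding dY_left_eq[of m "dY_right m V"]
      by (intro sum.cong refl) (simp add: pd_dY_right lmul_e_sum)
  also have "\<dots> = (\<Sum>k\<in>{2..m}. \<Sum>j\<in>{2..m}. rmul_e m k (lmul_e m j (pd k (pd j V) x)))"
  proof (subst sum.swap, intro sum.cong refl)
    fix k j assume "k \<in> {2..m}" "j \<in> {2..m}"
    then show "lmul_e m j (rmul_e m k (pd j (pd k V) x))
        = rmul_e m k (lmul_e m j (pd k (pd j V) x))"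
      using lmul_rmul_e_commute[of j m k] pd_commute[OF V, of j k x] by simp
  qed
  also have "\<dots> = dY_right m (dY_left m V) x"
    unfolding dY_right_eq[of m "dY_left m V"]
      by (intro sum.cong refl) (simp add: pd_dY_left rmul_e_sum)
  finally show ?thesis .
qed

end

lemma dY_left_zero: "dY_left m (\<lambda>x. 0) x = 0"
  unfolding dY_left_eq by (simp add: pd_zero lmul_e_zero)

section \<open>Smoothness is preserved\<close>

lemma smooth_real_line_differentiable: "smooth_real m g \<Longrightarrow> set js \<subseteq> {0..m} \<Longrightarrow> j \<le> m \<Longrightarrow>
  (\<lambda>t. iter_pdr js g (y(j:=t))) differentiable (at (y j))"
  unfolding smooth_real_def by auto

lemma iter_pdr_add:
  assumes f: "smooth_real m f" and g: "smooth_real m g"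
  shows "set js \<subseteq> {0..m} \<Longrightarrow> iter_pdr js (\<lambda>x. f x + g x) = (\<lambda>x. iter_pdr js f x + iter_pdr js g x)"
proof (induction js)
  case Nil then show ?case by simp
next
  case (Cons j js)
  then have js: "set js \<subseteq> {0..m}" and j: "j \<le> m" by auto
  show ?case
  proof (rule ext)
    fix y
    have "iter_pdr (j # js) (\<lambda>x. f x + g x) y = pdr j (\<lambda>x. iter_pdr js f x + iter_pdr js g x) y"
      using Cons(1)[OF js] by simp
    also have "\<dots> = iter_pdr (j # js) f y + iter_pdr (j # js) g y"
      unfolding pdr_def
      by (rule DERIV_imp_deriv, rule DERIV_add)
         (use iter_pdr_has_real_derivative[OF f js j] iter_pdr_has_real_derivative[OF g js j]
           in \<open>auto simp: pdr_def\<close>)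
    finally show "iter_pdr (j # js) (\<lambda>x. f x + g x) y
        = iter_pdr (j # js) f y + iter_pdr (j # js) g y" .
  qed
qed

lemma iter_pdr_cmult:
  assumes f: "smooth_real m f"
  shows "set js \<subseteq> {0..m} \<Longrightarrow> iter_pdr js (\<lambda>x. c * f x) = (\<lambda>x. c * iter_pdr js f x)"
proof (induction js)
  case Nil then show ?case by simp
next
  case (Cons j js)
  then have js: "set js \<subseteq> {0..m}" and j: "j \<le> m" by auto
  show ?case
  proof (rule ext)
    fix y
    have "iter_pdr (j # js) (\<lambda>x. c * f x) y = pdr j (\<lambda>x. c * iter_pdr js f x) y"
      using Cons(1)[OF js] by simp
    also have "\<dots> = c * iter_pdr (j # js) f y"
      unfolding pdr_def
      by (rule DERIV_imp_deriv, rule DERIV_cmult)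
         (use iter_pdr_has_real_derivative[OF f js j] in \<open>auto simp: pdr_def\<close>)
    finally show "iter_pdr (j # js) (\<lambda>x. c * f x) y = c * iter_pdr (j # js) f y" .
  qed
qed

lemma iter_pdr_zero: "iter_pdr js (\<lambda>x. 0) = (\<lambda>x. 0)"
  by (induction js) (auto simp: pdr_def fun_eq_iff)

lemma iter_pdr_pdr: "iter_pdr js (pdr j g) = iter_pdr (js @ [j]) g"
  by (induction js) auto

lemma smooth_real_add: "smooth_real m f \<Longrightarrow> smooth_real m g \<Longrightarrow> smooth_real m (\<lambda>x. f x + g x)"
  unfolding smooth_real_def[of m "\<lambda>x. f x + g x"]
  by (auto simp: iter_pdr_add smooth_real_line_differentiable intro!: continuous_intros
       intro: smooth_real_def[THEN iffD1, rule_format, THEN conjunct1])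

lemma smooth_real_cmult: "smooth_real m f \<Longrightarrow> smooth_real m (\<lambda>x. c * f x)"
  unfolding smooth_real_def[of m "\<lambda>x. c * f x"]
  by (auto simp: iter_pdr_cmult smooth_real_line_differentiable intro!: continuous_intros
       intro: smooth_real_def[THEN iffD1, rule_format, THEN conjunct1])

lemma smooth_real_zero: "smooth_real m (\<lambda>x. 0)"
  unfolding smooth_real_def by (simp add: iter_pdr_zero)

lemma smooth_real_pdr: "smooth_real m g \<Longrightarrow> j \<le> m \<Longrightarrow> smooth_real m (pdr j g)"
  unfolding smooth_real_def iter_pdr_pdr by auto

lemma smooth_cl_add: "smooth_cl m f \<Longrightarrow> smooth_cl m g \<Longrightarrow> smooth_cl m (\<lambda>x. f x + g x)"
  unfolding smooth_cl_def by (auto intro: cl_in_add smooth_real_add)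

lemma smooth_cl_scaleR: "smooth_cl m f \<Longrightarrow> smooth_cl m (\<lambda>x. r *\<^sub>R f x)"
  unfolding smooth_cl_def by (auto intro: cl_in_scaleR smooth_real_cmult)

lemma smooth_cl_diff: assumes "smooth_cl m f" "smooth_cl m g" shows "smooth_cl m (\<lambda>x. f x - g x)"
proof -
  have "smooth_cl m (\<lambda>x. f x + (-1) *\<^sub>R g x)" by (intro smooth_cl_add smooth_cl_scaleR assms)
  then show ?thesis by simp
qed

lemma smooth_cl_zero: "smooth_cl m (\<lambda>x. 0)"
  unfolding smooth_cl_def by (simp add: cl_in_zero smooth_real_zero)

lemma smooth_cl_lmul_e: assumes "smooth_cl m f" shows "smooth_cl m (\<lambda>x. lmul_e m k (f x))"
  unfolding smooth_cl_def
proof (intro conjI allI)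
  fix A
  show "smooth_real m (\<lambda>x. lmul_e m k (f x) A)"
  proof (cases "A \<subseteq> {1..m}")
    case True
    have "smooth_real m (\<lambda>x. cl_sign {k} (sym_diff A {k}) * f x (sym_diff A {k}))"
      using assms by (intro smooth_real_cmult) (simp add: smooth_cl_def)
    then show ?thesis using True by (simp add: lmul_e_def)
  next
    case False then show ?thesis by (simp add: lmul_e_def smooth_real_zero)
  qed
qed (simp add: cl_in_lmul_e)

lemma smooth_cl_rmul_e: assumes "smooth_cl m f" shows "smooth_cl m (\<lambda>x. rmul_e m k (f x))"
  unfolding smooth_cl_def
proof (intro conjI allI)
  fix A
  show "smooth_real m (\<lambda>x. rmul_e m k (f x) A)"
  proof (cases "A \<subseteq> {1..m}")
    case True
    have "smooth_real m (\<lambda>x. cl_sign (sym_diff A {k}) {k} * f x (sym_diff A {k}))"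
      using assms by (intro smooth_real_cmult) (simp add: smooth_cl_def)
    then show ?thesis using True by (simp add: rmul_e_def)
  next
    case False then show ?thesis by (simp add: rmul_e_def smooth_real_zero)
  qed
qed (simp add: cl_in_rmul_e)

lemma smooth_cl_pd: assumes "smooth_cl m f" "j \<le> m" shows "smooth_cl m (pd j f)"
  unfolding smooth_cl_def
proof (intro conjI allI)
  fix A
  have "smooth_real m (pdr j (\<lambda>x. f x A))"
    using assms by (intro smooth_real_pdr) (simp_all add: smooth_cl_def)
  then show "smooth_real m (\<lambda>x. pd j f x A)" by (simp add: pd_def[abs_def])
next
  fix x show "cl_in m (pd j f x)" using assms by (intro cl_in_pd smooth_cl_in)
qed

lemma smooth_cl_sum: "finite S \<Longrightarrow> (\<And>i. i \<in> S \<Longrightarrow> smooth_cl m (f i)) \<Longrightarrow> smooth_cl m (\<lambda>x. \<Sum>i\<in>S. f i x)"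
proof (induction S rule: finite_induct)
  case empty show ?case unfolding sum.empty by (rule smooth_cl_zero)
next
  case (insert a S) then show ?case unfolding sum.insert[OF insert(1,2)]
    by (intro smooth_cl_add) auto
qed

lemma smooth_cl_dY_left: assumes "smooth_cl m f" shows "smooth_cl m (dY_left m f)"
proof -
  have "smooth_cl m (\<lambda>x. \<Sum>j\<in>{2..m}. lmul_e m j (pd j f x))"
    using assms by (intro smooth_cl_sum smooth_cl_lmul_e smooth_cl_pd) auto
  moreover have "dY_left m f = (\<lambda>x. \<Sum>j\<in>{2..m}. lmul_e m j (pd j f x))"
    by (rule ext) (simp add: dY_left_eq)
  ultimately show ?thesis by simp
qed

section \<open>The trigonometric combination\<close>

definition cos_cosh :: "pt \<Rightarrow> real" where "cos_cosh x = cos (x 0) * cosh (x 1)"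
definition sin_cosh :: "pt \<Rightarrow> real" where "sin_cosh x = sin (x 0) * cosh (x 1)"
definition sin_sinh :: "pt \<Rightarrow> real" where "sin_sinh x = sin (x 0) * sinh (x 1)"
definition cos_sinh :: "pt \<Rightarrow> real" where "cos_sinh x = cos (x 0) * sinh (x 1)"

lemmas trig_coeff_defs = cos_cosh_def sin_cosh_def sin_sinh_def cos_sinh_def

definition trig_form ::
  "nat \<Rightarrow> (pt \<Rightarrow> cl) \<Rightarrow> (pt \<Rightarrow> cl) \<Rightarrow> (pt \<Rightarrow> cl) \<Rightarrow> (pt \<Rightarrow> cl) \<Rightarrow> pt \<Rightarrow> cl" where
  "trig_form m W1 W2 W3 W4 x = cos_cosh x *\<^sub>R W1 x + sin_cosh x *\<^sub>R W2 x
     + sin_sinh x *\<^sub>R lmul_e m 1 (W3 x) + cos_sinh x *\<^sub>R lmul_e m 1 (W4 x)"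

lemma trig_combo_eq_trig_form:
  assumes "m \<ge> 1" and cl: "\<And>x. cl_in m (A1 x)" "\<And>x. cl_in m (B1 x)" "\<And>x. cl_in m (A2 x)"
      "\<And>x. cl_in m (B2 x)"
  shows "trig_combo m A1 B1 A2 B2 = trig_form m (\<lambda>x. A1 x + A2 x) (\<lambda>x. B1 x + B2 x)
     (\<lambda>x. A2 x - A1 x) (\<lambda>x. B1 x - B2 x)"
  unfolding trig_combo_def trig_form_def cl_ops_eq
  by (intro ext)
      (simp add: cl cl_mult_of_complex[OF assms(1)] zc_def zbc_def Re_cos Im_cos Re_sin Im_sin
      trig_coeff_defs cosh_def sinh_def lmul_e_diff field_simps)

lemma pd_trig_form_0:
  assumes "depends_only_on_y m W1" "depends_only_on_y m W2" "depends_only_on_y m W3"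
      "depends_only_on_y m W4"
  shows "pd 0 (trig_form m W1 W2 W3 W4) x = (- sin_cosh x) *\<^sub>R W1 x + cos_cosh x *\<^sub>R W2 x
     + cos_sinh x *\<^sub>R lmul_e m 1 (W3 x) - sin_sinh x *\<^sub>R lmul_e m 1 (W4 x)"
proof (rule pd_eqI)
  fix C
  have "(0::nat) \<notin> {2..m}" by simp
  then have "(\<lambda>t. trig_form m W1 W2 W3 W4 (x(0:=t)) C) = (\<lambda>t. cos t * cosh (x 1) * W1 x C
     + sin t * cosh (x 1) * W2 x C + sin t * sinh (x 1) * lmul_e m 1 (W3 x) C
     + cos t * sinh (x 1) * lmul_e m 1 (W4 x) C)"
    using assms by (simp add: trig_form_def trig_coeff_defs depends_only_on_y_fun_upd)
  then show "((\<lambda>t. trig_form m W1 W2 W3 W4 (x(0:=t)) C) has_real_derivative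
     ((- sin_cosh x) *\<^sub>R W1 x + cos_cosh x *\<^sub>R W2 x + cos_sinh x *\<^sub>R lmul_e m 1 (W3 x)
      - sin_sinh x *\<^sub>R lmul_e m 1 (W4 x)) C) (at (x 0))"
    by (auto intro!: derivative_eq_intros simp: trig_coeff_defs algebra_simps)
qed

lemma pd_trig_form_1:
  assumes "depends_only_on_y m W1" "depends_only_on_y m W2" "depends_only_on_y m W3"
      "depends_only_on_y m W4"
  shows "pd 1 (trig_form m W1 W2 W3 W4) x = cos_sinh x *\<^sub>R W1 x + sin_sinh x *\<^sub>R W2 x
     + sin_cosh x *\<^sub>R lmul_e m 1 (W3 x) + cos_cosh x *\<^sub>R lmul_e m 1 (W4 x)"
proof (rule pd_eqI)
  fix C
  have "Suc 0 \<notin> {2..m}" by simp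
  then have "(\<lambda>t. trig_form m W1 W2 W3 W4 (x(1:=t)) C) = (\<lambda>t. cos (x 0) * cosh t * W1 x C
     + sin (x 0) * cosh t * W2 x C + sin (x 0) * sinh t * lmul_e m 1 (W3 x) C
     + cos (x 0) * sinh t * lmul_e m 1 (W4 x) C)"
    using assms by (simp add: trig_form_def trig_coeff_defs depends_only_on_y_fun_upd)
  then show "((\<lambda>t. trig_form m W1 W2 W3 W4 (x(1:=t)) C) has_real_derivative
     (cos_sinh x *\<^sub>R W1 x + sin_sinh x *\<^sub>R W2 x + sin_cosh x *\<^sub>R lmul_e m 1 (W3 x)
      + cos_cosh x *\<^sub>R lmul_e m 1 (W4 x)) C) (at (x 1))"
    by (auto intro!: derivative_eq_intros simp: trig_coeff_defs algebra_simps)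
qed

context
  fixes m :: nat and W1 W2 W3 W4 :: "pt \<Rightarrow> cl"
  assumes m2: "m \<ge> 2"
    and diff: "partially_differentiable m W1" "partially_differentiable m W2"
      "partially_differentiable m W3" "partially_differentiable m W4"
begin

lemma pd_trig_form_y:
  assumes j: "j \<in> {2..m}"
  shows "pd j (trig_form m W1 W2 W3 W4) x = cos_cosh x *\<^sub>R pd j W1 x + sin_cosh x *\<^sub>R pd j W2 x
     + sin_sinh x *\<^sub>R lmul_e m 1 (pd j W3 x) + cos_sinh x *\<^sub>R lmul_e m 1 (pd j W4 x)"
proof -
  define G where "G y = cos_cosh x *\<^sub>R W1 y + sin_cosh x *\<^sub>R W2 y
    + sin_sinh x *\<^sub>R lmul_e m 1 (W3 y) + cos_sinh x *\<^sub>R lmul_e m 1 (W4 y)" for y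
  have "pd j (trig_form m W1 W2 W3 W4) x = pd j G x"
    by (rule pd_cong_line) (use j in \<open>simp add: trig_form_def G_def trig_coeff_defs\<close>)
  also have "\<dots> = cos_cosh x *\<^sub>R pd j W1 x + sin_cosh x *\<^sub>R pd j W2 x
     + sin_sinh x *\<^sub>R lmul_e m 1 (pd j W3 x) + cos_sinh x *\<^sub>R lmul_e m 1 (pd j W4 x)"
    unfolding G_def using diff j
    by (simp add: pd_add[where m=m] pd_scaleR[where m=m] pd_lmul_e[where m=m]
        partially_differentiable_add
        partially_differentiable_scaleR partially_differentiable_lmul_e)
  finally show ?thesis .
qed

lemma dY_left_trig_form:
  "dY_left m (trig_form m W1 W2 W3 W4) x
      = cos_cosh x *\<^sub>R dY_left m W1 x + sin_cosh x *\<^sub>R dY_left m W2 x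
     - sin_sinh x *\<^sub>R lmul_e m 1 (dY_left m W3 x) - cos_sinh x *\<^sub>R lmul_e m 1 (dY_left m W4 x)"
proof -
  have "lmul_e m j (pd j (trig_form m W1 W2 W3 W4) x) =
      cos_cosh x *\<^sub>R lmul_e m j (pd j W1 x) + sin_cosh x *\<^sub>R lmul_e m j (pd j W2 x)
      - sin_sinh x *\<^sub>R lmul_e m 1 (lmul_e m j (pd j W3 x))
      - cos_sinh x *\<^sub>R lmul_e m 1 (lmul_e m j (pd j W4 x))" if j: "j \<in> {2..m}" for j
    using j m2 lmul_e_anticommute[of j m 1]
    by (simp add: pd_trig_form_y[OF j] lmul_e_add lmul_e_scaleR lmul_e_minus)
  then show ?thesis
    unfolding dY_left_eq
    by (simp add: sum.distrib sum_subtractf scaleR_sum_right lmul_e_sum)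
qed

lemma dY_right_trig_form:
  "dY_right m (trig_form m W1 W2 W3 W4) x
      = cos_cosh x *\<^sub>R dY_right m W1 x + sin_cosh x *\<^sub>R dY_right m W2 x
     + sin_sinh x *\<^sub>R lmul_e m 1 (dY_right m W3 x) + cos_sinh x *\<^sub>R lmul_e m 1 (dY_right m W4 x)"
proof -
  have "rmul_e m j (pd j (trig_form m W1 W2 W3 W4) x) =
      cos_cosh x *\<^sub>R rmul_e m j (pd j W1 x) + sin_cosh x *\<^sub>R rmul_e m j (pd j W2 x)
      + sin_sinh x *\<^sub>R lmul_e m 1 (rmul_e m j (pd j W3 x))
      + cos_sinh x *\<^sub>R lmul_e m 1 (rmul_e m j (pd j W4 x))" if j: "j \<in> {2..m}" for j
    using j m2 lmul_rmul_e_commute[of 1 m j]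
    by (simp add: pd_trig_form_y[OF j] rmul_e_add rmul_e_scaleR)
  then show ?thesis
    unfolding dY_right_eq
    by (simp add: sum.distrib scaleR_sum_right lmul_e_sum)
qed

lemma dX_left_trig_form:
  assumes dep: "depends_only_on_y m W1" "depends_only_on_y m W2" "depends_only_on_y m W3"
      "depends_only_on_y m W4"
    and cl: "cl_in m (W3 x)" "cl_in m (W4 x)"
  shows "dX_left m (trig_form m W1 W2 W3 W4) x =
    trig_form m (\<lambda>x. W2 x - W4 x + dY_left m W1 x) (\<lambda>x. - W1 x - W3 x + dY_left m W2 x)
      (\<lambda>x. W2 x - W4 x - dY_left m W3 x) (\<lambda>x. W1 x + W3 x - dY_left m W4 x) x"
proof -
  have e1: "(1::nat) \<in> {1..m}" and m1: "m \<ge> 1" using m2 by auto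
  have "dX_left m (trig_form m W1 W2 W3 W4) x = pd 0 (trig_form m W1 W2 W3 W4) x
      + lmul_e m 1 (pd 1 (trig_form m W1 W2 W3 W4) x) + dY_left m (trig_form m W1 W2 W3 W4) x"
    by (rule dX_left_eq[OF m1])
  also have "\<dots> = trig_form m (\<lambda>x. W2 x - W4 x + dY_left m W1 x) (\<lambda>x. - W1 x - W3 x + dY_left m W2 x)
      (\<lambda>x. W2 x - W4 x - dY_left m W3 x) (\<lambda>x. W1 x + W3 x - dY_left m W4 x) x"
    using lmul_e_lmul_e_same[OF e1 cl(1)] lmul_e_lmul_e_same[OF e1 cl(2)]
    unfolding pd_trig_form_0[OF dep] pd_trig_form_1[OF dep] dY_left_trig_form
    \<comment> \<open>the simp rule \<open>One_nat_def\<close> would turn the index of \<open>e\<^sub>1\<close> into \<open>Suc 0\<close>,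
      so that facts about \<open>lmul_e m 1\<close> no longer match\<close>
    by (simp add: trig_form_def lmul_e_add lmul_e_diff lmul_e_minus lmul_e_scaleR algebra_simps
        del: One_nat_def)
  finally show ?thesis .
qed

lemma dX_right_trig_form:
  assumes dep: "depends_only_on_y m W1" "depends_only_on_y m W2" "depends_only_on_y m W3"
      "depends_only_on_y m W4"
    and cl: "cl_in m (W1 x)" "cl_in m (W2 x)" "cl_in m (W4 x)"
  shows "dX_right m (trig_form m W1 W2 W3 W4) x =
    trig_form m (\<lambda>x. W2 x + rmul_e m 1 (lmul_e m 1 (W4 x)) + dY_right m W1 x)
      (\<lambda>x. - W1 x + rmul_e m 1 (lmul_e m 1 (W3 x)) + dY_right m W2 x)
      (\<lambda>x. dY_right m W3 x - W4 x - rmul_e m 1 (lmul_e m 1 (W2 x)))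
      (\<lambda>x. dY_right m W4 x + W3 x - rmul_e m 1 (lmul_e m 1 (W1 x))) x"
proof -
  have e1: "(1::nat) \<in> {1..m}" and m1: "m \<ge> 1" using m2 by auto
  have "lmul_e m 1 (rmul_e m 1 (lmul_e m 1 a)) = - rmul_e m 1 a" if "cl_in m a" for a
    using lmul_e_lmul_e_same[OF e1 that]
    by (simp add: lmul_rmul_e_commute[OF e1 e1] rmul_e_minus del: One_nat_def)
  note e1_e1 = this[OF cl(1)] this[OF cl(2)] lmul_e_lmul_e_same[OF e1 cl(3)]
  have "dX_right m (trig_form m W1 W2 W3 W4) x = pd 0 (trig_form m W1 W2 W3 W4) x
      + rmul_e m 1 (pd 1 (trig_form m W1 W2 W3 W4) x) + dY_right m (trig_form m W1 W2 W3 W4) x"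
    by (rule dX_right_eq[OF m1])
  also have "\<dots> = trig_form m (\<lambda>x. W2 x + rmul_e m 1 (lmul_e m 1 (W4 x)) + dY_right m W1 x)
      (\<lambda>x. - W1 x + rmul_e m 1 (lmul_e m 1 (W3 x)) + dY_right m W2 x)
      (\<lambda>x. dY_right m W3 x - W4 x - rmul_e m 1 (lmul_e m 1 (W2 x)))
      (\<lambda>x. dY_right m W4 x + W3 x - rmul_e m 1 (lmul_e m 1 (W1 x))) x"
    using e1_e1 unfolding pd_trig_form_0[OF dep] pd_trig_form_1[OF dep] dY_right_trig_form
    by (simp add: trig_form_def lmul_e_add lmul_e_diff lmul_e_minus lmul_e_scaleR rmul_e_add
        rmul_e_diff rmul_e_minus rmul_e_scaleR algebra_simps del: One_nat_def)
  finally show ?thesis .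
qed

end

lemma cos_cosh_sin_sinh_independent:
  fixes a b c d :: "'a::real_vector"
  assumes "\<And>s t. (cos s * cosh t) *\<^sub>R a + (sin s * cosh t) *\<^sub>R b
    + (sin s * sinh t) *\<^sub>R c + (cos s * sinh t) *\<^sub>R d = 0"
  shows "a = 0 \<and> b = 0 \<and> c = 0 \<and> d = 0"
proof -
  have a: "a = 0" and b: "b = 0" using assms[of 0 0] assms[of "pi/2" 0] by simp_all
  moreover have "cosh 1 *\<^sub>R a + sinh 1 *\<^sub>R d = 0" "cosh 1 *\<^sub>R b + sinh 1 *\<^sub>R c = 0"
    using assms[of 0 1] assms[of "pi/2" 1] by simp_all
  ultimately show ?thesis by simp
qed

lemma trig_form_eq_0_iff:
  assumes "m \<ge> 1"
    and dep: "depends_only_on_y m W1" "depends_only_on_y m W2" "depends_only_on_y m W3"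
        "depends_only_on_y m W4"
    and cl: "\<And>x. cl_in m (W3 x)" "\<And>x. cl_in m (W4 x)"
  shows "(\<forall>x. trig_form m W1 W2 W3 W4 x = 0) \<longleftrightarrow> (\<forall>x. W1 x = 0 \<and> W2 x = 0 \<and> W3 x = 0 \<and> W4 x = 0)"
proof (intro iffI allI)
  fix x
  assume "\<forall>x. trig_form m W1 W2 W3 W4 x = 0"
  then have "trig_form m W1 W2 W3 W4 (x(0:=s, Suc 0:=t)) = 0" for s t by blast
  then have "W1 x = 0 \<and> W2 x = 0 \<and> lmul_e m 1 (W3 x) = 0 \<and> lmul_e m 1 (W4 x) = 0"
    by (intro cos_cosh_sin_sinh_independent)
       (simp add: trig_form_def trig_coeff_defs depends_only_on_y_fun_upd_01[OF dep(1)]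
         depends_only_on_y_fun_upd_01[OF dep(2)] depends_only_on_y_fun_upd_01[OF dep(3)]
         depends_only_on_y_fun_upd_01[OF dep(4)])
  moreover have "(1::nat) \<in> {1..m}" using assms(1) by simp
  ultimately show "W1 x = 0 \<and> W2 x = 0 \<and> W3 x = 0 \<and> W4 x = 0"
    using lmul_e_eq_0_iff cl by blast
qed (simp add: trig_form_def lmul_e_zero)

lemma add_and_diff_eq_0_iff:
  fixes u a :: "'a::real_vector"
  shows "u + a = 0 \<and> u - a = 0 \<longleftrightarrow> u = 0 \<and> a = 0"
proof
  assume h: "u + a = 0 \<and> u - a = 0"
  then have "u = a" "2 *\<^sub>R a = 0" by (auto simp: scaleR_2)
  then show "u = 0 \<and> a = 0" by simp
qed simp

lemma double_add_eq_0_iff: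
  fixes b d :: "'a::real_vector"
  shows "2 *\<^sub>R b + d = 0 \<longleftrightarrow> b = (-1/2) *\<^sub>R d"
  by (auto simp: algebra_simps scaleR_2[symmetric] eq_neg_iff_add_eq_0[symmetric])

lemma diff_double_eq_0_iff:
  fixes c d :: "'a::real_vector"
  shows "d - 2 *\<^sub>R c = 0 \<longleftrightarrow> c = (1/2) *\<^sub>R d"
  by (auto simp: algebra_simps scaleR_2[symmetric])

lemma trig_form_sum_diff_eq_0_iff:
  assumes "m \<ge> 1"
    and "depends_only_on_y m u" "depends_only_on_y m a" "depends_only_on_y m v"
        "depends_only_on_y m b"
    and "\<And>x. cl_in m (u x)" "\<And>x. cl_in m (a x)" "\<And>x. cl_in m (v x)" "\<And>x. cl_in m (b x)"
  shows "(\<forall>x. trig_form m (\<lambda>x. u x + a x) (\<lambda>x. v x + b x) (\<lambda>x. u x - a x) (\<lambda>x. v x - b x) x = 0)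
    \<longleftrightarrow> (\<forall>x. u x = 0 \<and> a x = 0 \<and> v x = 0 \<and> b x = 0)"
proof -
  have "(\<forall>x. trig_form m (\<lambda>x. u x + a x) (\<lambda>x. v x + b x) (\<lambda>x. u x - a x) (\<lambda>x. v x - b x) x = 0)
    \<longleftrightarrow> (\<forall>x. u x + a x = 0 \<and> v x + b x = 0 \<and> u x - a x = 0 \<and> v x - b x = 0)"
    by (rule trig_form_eq_0_iff) (use assms in \<open>auto intro: depends_only_on_y_intros cl_in_intros\<close>)
  also have "\<dots> \<longleftrightarrow> (\<forall>x. u x = 0 \<and> a x = 0 \<and> v x = 0 \<and> b x = 0)"
    using add_and_diff_eq_0_iff[of "u x" "a x" for x] add_and_diff_eq_0_iff[of "v x" "b x" for x]
    by blast
  finally show ?thesis .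
qed

(* When A\<^sub>2 = \<partial>\<^sub>yB\<^sub>1/2 and B\<^sub>2 = -\<partial>\<^sub>yA\<^sub>1/2, the right-monogenicity equations for (A\<^sub>2, B\<^sub>2)
   are the images under \<partial>\<^sub>y of those for (A\<^sub>1, B\<^sub>1). *)
context
  fixes m :: nat and A1 B1 :: "pt \<Rightarrow> cl"
  assumes m2: "m \<ge> 2" and sm: "smooth_cl m A1" "smooth_cl m B1"
begin

lemma dY_left_second_equation:
  "(1/2) *\<^sub>R dY_left m (\<lambda>x. dY_right m B1 x - A1 x - rmul_e m 1 (lmul_e m 1 (A1 x))) x =
    dY_right m (\<lambda>x. (1/2) *\<^sub>R dY_left m B1 x) x + (-1/2) *\<^sub>R dY_left m A1 x
      - rmul_e m 1 (lmul_e m 1 ((-1/2) *\<^sub>R dY_left m A1 x))"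
proof -
  note diff = partially_differentiable_dY_right[OF sm(2)] smooth_cl_partially_differentiable[OF sm(1)]
  have eq: "dY_left m (\<lambda>x. dY_right m B1 x - A1 x - rmul_e m 1 (lmul_e m 1 (A1 x))) x =
      dY_left m (dY_right m B1) x - dY_left m A1 x + rmul_e m 1 (lmul_e m 1 (dY_left m A1 x))"
    using m2 diff
    by (simp add: dY_left_diff dY_left_rmul_e1 dY_left_lmul_e1 rmul_e_minus partially_differentiable_diff
        partially_differentiable_rmul_e partially_differentiable_lmul_e del: One_nat_def)
  show ?thesis
    unfolding eq dY_right_scaleR[OF partially_differentiable_dY_left[OF sm(2)]]
      dY_left_dY_right_commute[OF sm(2)]
    by (simp add: rmul_e_scaleR lmul_e_scaleR rmul_e_minus lmul_e_minus algebra_simps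
        del: One_nat_def)
qed

lemma dY_left_first_equation:
  "(-1/2) *\<^sub>R dY_left m (\<lambda>x. dY_right m A1 x + B1 x + rmul_e m 1 (lmul_e m 1 (B1 x))) x =
    dY_right m (\<lambda>x. (-1/2) *\<^sub>R dY_left m A1 x) x - (1/2) *\<^sub>R dY_left m B1 x
      + rmul_e m 1 (lmul_e m 1 ((1/2) *\<^sub>R dY_left m B1 x))"
proof -
  note diff = partially_differentiable_dY_right[OF sm(1)] smooth_cl_partially_differentiable[OF sm(2)]
  have eq: "dY_left m (\<lambda>x. dY_right m A1 x + B1 x + rmul_e m 1 (lmul_e m 1 (B1 x))) x =
      dY_left m (dY_right m A1) x + dY_left m B1 x - rmul_e m 1 (lmul_e m 1 (dY_left m B1 x))"
    using m2 diff
    by (simp add: dY_left_add dY_left_rmul_e1 dY_left_lmul_e1 rmul_e_minus partially_differentiable_add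
        partially_differentiable_rmul_e partially_differentiable_lmul_e del: One_nat_def)
  show ?thesis
    unfolding eq dY_right_scaleR[OF partially_differentiable_dY_left[OF sm(1)]]
      dY_left_dY_right_commute[OF sm(1)]
    by (simp add: rmul_e_scaleR lmul_e_scaleR rmul_e_minus lmul_e_minus algebra_simps
        del: One_nat_def)
qed

end

context
  fixes m :: nat and A1 B1 A2 B2 :: "pt \<Rightarrow> cl"
  assumes m2: "m \<ge> 2"
    and sm: "smooth_cl m A1" "smooth_cl m B1" "smooth_cl m A2" "smooth_cl m B2"
    and dep: "depends_only_on_y m A1" "depends_only_on_y m B1"
      "depends_only_on_y m A2" "depends_only_on_y m B2"
begin

lemma dX_left_trig_combo:
  "dX_left m (trig_combo m A1 B1 A2 B2) x = trig_form m
     (\<lambda>x. (2 *\<^sub>R B2 x + dY_left m A1 x) + dY_left m A2 x)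
     (\<lambda>x. dY_left m B2 x + (dY_left m B1 x - 2 *\<^sub>R A2 x))
     (\<lambda>x. (2 *\<^sub>R B2 x + dY_left m A1 x) - dY_left m A2 x)
     (\<lambda>x. dY_left m B2 x - (dY_left m B1 x - 2 *\<^sub>R A2 x)) x"
proof -
  have m1: "m \<ge> 1" using m2 by simp
  note diff = sm[THEN smooth_cl_partially_differentiable] and cl = sm[THEN smooth_cl_in]
  show ?thesis
    unfolding trig_combo_eq_trig_form[OF m1 cl]
    by (subst dX_left_trig_form)
       (auto intro: m2 diff dep cl partially_differentiable_add partially_differentiable_diff
          depends_only_on_y_add depends_only_on_y_diff cl_in_diff
        simp: trig_form_def dY_left_add dY_left_diff diff scaleR_2 algebra_simps)
qed

lemma dX_right_trig_combo:
  "dX_right m (trig_combo m A1 B1 A2 B2) x = trig_form m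
     (\<lambda>x. (dY_right m A2 x + B2 x - rmul_e m 1 (lmul_e m 1 (B2 x)))
        + (dY_right m A1 x + B1 x + rmul_e m 1 (lmul_e m 1 (B1 x))))
     (\<lambda>x. (dY_right m B1 x - A1 x - rmul_e m 1 (lmul_e m 1 (A1 x)))
        + (dY_right m B2 x - A2 x + rmul_e m 1 (lmul_e m 1 (A2 x))))
     (\<lambda>x. (dY_right m A2 x + B2 x - rmul_e m 1 (lmul_e m 1 (B2 x)))
        - (dY_right m A1 x + B1 x + rmul_e m 1 (lmul_e m 1 (B1 x))))
     (\<lambda>x. (dY_right m B1 x - A1 x - rmul_e m 1 (lmul_e m 1 (A1 x)))
        - (dY_right m B2 x - A2 x + rmul_e m 1 (lmul_e m 1 (A2 x)))) x"
proof -
  have m1: "m \<ge> 1" using m2 by simp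
  note diff = sm[THEN smooth_cl_partially_differentiable] and cl = sm[THEN smooth_cl_in]
  show ?thesis
    unfolding trig_combo_eq_trig_form[OF m1 cl]
    by (subst dX_right_trig_form)
       (auto intro: m2 diff dep cl partially_differentiable_add partially_differentiable_diff
          depends_only_on_y_add depends_only_on_y_diff cl_in_add cl_in_diff
        simp: trig_form_def dY_right_add dY_right_diff diff lmul_e_add lmul_e_diff rmul_e_add rmul_e_diff algebra_simps)
qed

lemma left_monogenic_trig_combo_iff:
  "left_monogenic m (trig_combo m A1 B1 A2 B2) \<longleftrightarrow>
    (\<forall>x. A2 x = (1/2) *\<^sub>R dY_left m B1 x \<and> B2 x = (-1/2) *\<^sub>R dY_left m A1 x \<and>
         dY_left m A2 x = 0 \<and> dY_left m B2 x = 0)"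
  unfolding left_monogenic_def dX_left_trig_combo cl_zero_eq
  by (subst trig_form_sum_diff_eq_0_iff, use m2 in simp,
      (intro depends_only_on_y_intros dep cl_in_intros cl_in_dY_left sm[THEN smooth_cl_in])+)
     (auto simp: double_add_eq_0_iff diff_double_eq_0_iff)

lemma right_monogenic_trig_combo_iff:
  "right_monogenic m (trig_combo m A1 B1 A2 B2) \<longleftrightarrow>
    (\<forall>x. dY_right m A1 x + B1 x + rmul_e m 1 (lmul_e m 1 (B1 x)) = 0 \<and>
         dY_right m B1 x - A1 x - rmul_e m 1 (lmul_e m 1 (A1 x)) = 0 \<and>
         dY_right m A2 x + B2 x - rmul_e m 1 (lmul_e m 1 (B2 x)) = 0 \<and>
         dY_right m B2 x - A2 x + rmul_e m 1 (lmul_e m 1 (A2 x)) = 0)"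
  unfolding right_monogenic_def dX_right_trig_combo cl_zero_eq
  by (subst trig_form_sum_diff_eq_0_iff, use m2 in simp,
      (intro depends_only_on_y_intros dep cl_in_intros cl_in_dY_right sm[THEN smooth_cl_in])+)
     auto

lemma two_sided_monogenic_trig_combo_iff:
  "two_sided_monogenic m (trig_combo m A1 B1 A2 B2) \<longleftrightarrow>
     harmonic m A1 \<and> harmonic m B1 \<and>
     (\<forall>x. dY_right m A1 x + B1 x + rmul_e m 1 (lmul_e m 1 (B1 x)) = 0) \<and>
     (\<forall>x. dY_right m B1 x - A1 x - rmul_e m 1 (lmul_e m 1 (A1 x)) = 0) \<and>
     (\<forall>x. A2 x = (1/2) *\<^sub>R dY_left m B1 x) \<and> (\<forall>x. B2 x = (-1/2) *\<^sub>R dY_left m A1 x)"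
    (is "_ \<longleftrightarrow> _ \<and> _ \<and> (\<forall>x. ?R1 x = 0) \<and> (\<forall>x. ?R2 x = 0) \<and> ?A2 \<and> ?B2")
proof -
  have consequences:
      "dY_left m A2 x = (-1/2) *\<^sub>R lap_y m B1 x \<and> dY_left m B2 x = (1/2) *\<^sub>R lap_y m A1 x \<and>
      dY_right m A2 x + B2 x - rmul_e m 1 (lmul_e m 1 (B2 x)) = (1/2) *\<^sub>R dY_left m ?R2 x \<and>
      dY_right m B2 x - A2 x + rmul_e m 1 (lmul_e m 1 (A2 x)) = (-1/2) *\<^sub>R dY_left m ?R1 x"
    if ?A2 ?B2 for x
  proof -
    from that have A2: "A2 = (\<lambda>x. (1/2) *\<^sub>R dY_left m B1 x)"
      and B2: "B2 = (\<lambda>x. (-1/2) *\<^sub>R dY_left m A1 x)" by auto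
    show ?thesis
      unfolding A2 B2 dY_left_scaleR[OF partially_differentiable_dY_left[OF sm(1)]]
        dY_left_scaleR[OF partially_differentiable_dY_left[OF sm(2)]]
        dY_left_dY_left[OF sm(1)] dY_left_dY_left[OF sm(2)]
        dY_left_second_equation[OF m2 sm(1,2), symmetric]
            dY_left_first_equation[OF m2 sm(1,2), symmetric]
      by simp
  qed
  have "(\<forall>x. ?R1 x = 0) \<Longrightarrow> dY_left m ?R1 x = 0" "(\<forall>x. ?R2 x = 0) \<Longrightarrow> dY_left m ?R2 x = 0" for x
    by (simp_all add: dY_left_zero)
  with consequences show ?thesis
    unfolding two_sided_monogenic_def left_monogenic_trig_combo_iff
      right_monogenic_trig_combo_iff harmonic_def cl_zero_eq
    by (auto 0 3)
qed

end

lemma rmul_lmul_e1_involutive: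
  assumes "m \<ge> 1" "cl_in m v" shows "rmul_e m 1 (lmul_e m 1 (rmul_e m 1 (lmul_e m 1 v))) = v"
proof -
  have e1: "(1::nat) \<in> {1..m}" using assms(1) by simp
  have "lmul_e m 1 (rmul_e m 1 (lmul_e m 1 v)) = rmul_e m 1 (lmul_e m 1 (lmul_e m 1 v))"
    by (rule lmul_rmul_e_commute[OF e1 e1])
  also have "\<dots> = - rmul_e m 1 v" using lmul_e_lmul_e_same[OF e1 assms(2)]
    by (simp add: rmul_e_minus)
  finally show ?thesis using rmul_e_rmul_e_same[OF e1 assms(2)] by (simp add: rmul_e_minus)
qed

context
  fixes m :: nat and V :: "pt \<Rightarrow> cl"
  assumes V: "partially_differentiable m V"
begin

lemma pd_diff_rmul_lmul_e1:
  "j \<le> m \<Longrightarrow> pd j (\<lambda>x. V x - rmul_e m 1 (lmul_e m 1 (V x))) x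
      = pd j V x - rmul_e m 1 (lmul_e m 1 (pd j V x))"
  using V by (simp add: pd_diff pd_rmul_e pd_lmul_e partially_differentiable_rmul_e
      partially_differentiable_lmul_e del: One_nat_def)

lemma dY_left_diff_rmul_lmul_e1:
  "m \<ge> 2 \<Longrightarrow> dY_left m (\<lambda>x. V x - rmul_e m 1 (lmul_e m 1 (V x))) x
      = dY_left m V x + rmul_e m 1 (lmul_e m 1 (dY_left m V x))"
  using V by (simp add: dY_left_diff dY_left_rmul_e1 dY_left_lmul_e1 rmul_e_minus
      partially_differentiable_rmul_e partially_differentiable_lmul_e del: One_nat_def)

lemma dY_right_diff_rmul_lmul_e1:
  "m \<ge> 2 \<Longrightarrow> dY_right m (\<lambda>x. V x - rmul_e m 1 (lmul_e m 1 (V x))) x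
      = dY_right m V x + rmul_e m 1 (lmul_e m 1 (dY_right m V x))"
  using V by (simp add: dY_right_diff dY_right_rmul_e1 dY_right_lmul_e1 rmul_e_minus
      partially_differentiable_rmul_e partially_differentiable_lmul_e del: One_nat_def)

end

lemma lap_y_diff_rmul_lmul_e1:
  assumes "smooth_cl m V"
  shows "lap_y m (\<lambda>x. V x - rmul_e m 1 (lmul_e m 1 (V x))) x
      = lap_y m V x - rmul_e m 1 (lmul_e m 1 (lap_y m V x))"
proof -
  have "pd j (pd j (\<lambda>x. V x - rmul_e m 1 (lmul_e m 1 (V x)))) x
      = pd j (pd j V) x - rmul_e m 1 (lmul_e m 1 (pd j (pd j V) x))" if "j \<in> {2..m}" for j
  proof -
    have j: "j \<le> m" using that by simp
    have "pd j (\<lambda>x. V x - rmul_e m 1 (lmul_e m 1 (V x)))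
        = (\<lambda>y. pd j V y - rmul_e m 1 (lmul_e m 1 (pd j V y)))"
      using pd_diff_rmul_lmul_e1[OF smooth_cl_partially_differentiable[OF assms] j] by blast
    then show ?thesis
      using pd_diff_rmul_lmul_e1[OF partially_differentiable_pd[OF assms j] j] by simp
  qed
  then show ?thesis unfolding lap_y_eq
    by (simp add: sum_subtractf lmul_e_sum rmul_e_sum del: One_nat_def)
qed

lemma harmonic_if_dY_right_eq_0:
  assumes "smooth_cl m V" "\<And>x. dY_right m V x = 0" shows "harmonic m V"
proof -
  have "dY_right m V = (\<lambda>x. 0)" using assms(2) by (rule ext)
  then show ?thesis
    using dY_right_dY_right[OF assms(1)] by (simp add: harmonic_def cl_zero_eq dY_right_eq pd_zero rmul_e_zero)
qed

lemma two_sided_monogenic_trig_combo_of_right_monogenic: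
  fixes M N :: "pt \<Rightarrow> cl"
  assumes m2: "m \<ge> 2" and sm: "smooth_cl m M" "smooth_cl m N"
    and dep: "depends_only_on_y m M" "depends_only_on_y m N"
    and rM: "\<And>x. dY_right m M x = 0" and rN: "\<And>x. dY_right m N x = 0"
  shows "two_sided_monogenic m (trig_combo m
     (\<lambda>x. M x - rmul_e m 1 (lmul_e m 1 (M x))) (\<lambda>x. N x - rmul_e m 1 (lmul_e m 1 (N x)))
     (\<lambda>x. (1/2) *\<^sub>R (dY_left m N x + rmul_e m 1 (lmul_e m 1 (dY_left m N x))))
     (\<lambda>x. (-1/2) *\<^sub>R (dY_left m M x + rmul_e m 1 (lmul_e m 1 (dY_left m M x)))))"
proof -
  let ?P = "\<lambda>v. rmul_e m 1 (lmul_e m 1 v)"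
  have m1: "m \<ge> 1" using m2 by simp
  have smP: "smooth_cl m (\<lambda>x. V x - ?P (V x))" if "smooth_cl m V" for V
    using that by (intro smooth_cl_diff smooth_cl_rmul_e smooth_cl_lmul_e)
  have smQ: "smooth_cl m (\<lambda>x. r *\<^sub>R (dY_left m V x + ?P (dY_left m V x)))" if "smooth_cl m V" for V r
    using that
    by (intro smooth_cl_scaleR smooth_cl_add smooth_cl_rmul_e smooth_cl_lmul_e smooth_cl_dY_left)
  have first_order: "dY_right m (\<lambda>x. V x - ?P (V x)) x = 0"
      if "smooth_cl m V" "\<And>x. dY_right m V x = 0" for V x
    using that dY_right_diff_rmul_lmul_e1[OF smooth_cl_partially_differentiable[OF that(1)] m2]
    by (simp add: lmul_e_zero rmul_e_zero)
  show ?thesis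
  proof (subst two_sided_monogenic_trig_combo_iff[OF m2 smP[OF sm(1)] smP[OF sm(2)]
        smQ[OF sm(2)] smQ[OF sm(1)]], (intro depends_only_on_y_intros dep)+, intro conjI allI)
    fix x
    show "harmonic m (\<lambda>x. M x - ?P (M x))" "harmonic m (\<lambda>x. N x - ?P (N x))"
      using harmonic_if_dY_right_eq_0[OF sm(1) rM] harmonic_if_dY_right_eq_0[OF sm(2) rN]
      unfolding harmonic_def cl_zero_eq lap_y_diff_rmul_lmul_e1[OF sm(1)] lap_y_diff_rmul_lmul_e1[OF sm(2)]
      by (simp_all add: lmul_e_zero rmul_e_zero del: One_nat_def)
    show "dY_right m (\<lambda>x. M x - ?P (M x)) x + (N x - ?P (N x)) + ?P (N x - ?P (N x)) = 0"
      using first_order[OF sm(1) rM, of x] rmul_lmul_e1_involutive[OF m1 smooth_cl_in[OF sm(2)]]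
      by (simp add: lmul_e_diff rmul_e_diff del: One_nat_def)
    show "dY_right m (\<lambda>x. N x - ?P (N x)) x - (M x - ?P (M x)) - ?P (M x - ?P (M x)) = 0"
      using first_order[OF sm(2) rN, of x] rmul_lmul_e1_involutive[OF m1 smooth_cl_in[OF sm(1)]]
      by (simp add: lmul_e_diff rmul_e_diff del: One_nat_def)
    show "(1/2) *\<^sub>R (dY_left m N x + ?P (dY_left m N x)) = (1/2) *\<^sub>R dY_left m (\<lambda>x. N x - ?P (N x)) x"
      by (simp only: dY_left_diff_rmul_lmul_e1[OF smooth_cl_partially_differentiable[OF sm(2)] m2])
    show "(-1/2) *\<^sub>R (dY_left m M x + ?P (dY_left m M x))
        = (-1/2) *\<^sub>R dY_left m (\<lambda>x. M x - ?P (M x)) x"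
      by (simp only: dY_left_diff_rmul_lmul_e1[OF smooth_cl_partially_differentiable[OF sm(1)] m2])
  qed
qed

theorem theorem2:
  fixes m :: nat and A1 B1 A2 B2 :: "pt \<Rightarrow> cl"
  assumes m2: "m \<ge> 2"
    and sm: "smooth_cl m A1" "smooth_cl m B1" "smooth_cl m A2" "smooth_cl m B2"
    and dep: "depends_only_on_y m A1" "depends_only_on_y m B1"
             "depends_only_on_y m A2" "depends_only_on_y m B2"
  shows "(two_sided_monogenic m (trig_combo m A1 B1 A2 B2) \<longleftrightarrow>
           harmonic m A1 \<and> harmonic m B1 \<and>
           (\<forall>x. cl_add (cl_add (dY_right m A1 x) (B1 x))
                        (cl_mult m (cl_mult m (cl_e 1) (B1 x)) (cl_e 1)) = cl_zero) \<and>
           (\<forall>x. cl_sub (cl_sub (dY_right m B1 x) (A1 x))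
                        (cl_mult m (cl_mult m (cl_e 1) (A1 x)) (cl_e 1)) = cl_zero) \<and>
           (\<forall>x. A2 x = cl_scale (1/2) (dY_left m B1 x)) \<and>
           (\<forall>x. B2 x = cl_scale (-1/2) (dY_left m A1 x)))
       \<and> (\<forall>M N. smooth_cl m M \<and> smooth_cl m N \<and>
              depends_only_on_y m M \<and> depends_only_on_y m N \<and>
              (\<forall>x. dY_right m M x = cl_zero) \<and> (\<forall>x. dY_right m N x = cl_zero) \<longrightarrow>
            two_sided_monogenic m
              (trig_combo m
                 (\<lambda>x. cl_sub (M x) (cl_mult m (cl_mult m (cl_e 1) (M x)) (cl_e 1)))
                 (\<lambda>x. cl_sub (N x) (cl_mult m (cl_mult m (cl_e 1) (N x)) (cl_e 1)))
                 (\<lambda>x. cl_scale (1/2) (cl_add (dY_left m N x)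
                        (cl_mult m (cl_mult m (cl_e 1) (dY_left m N x)) (cl_e 1))))
                 (\<lambda>x. cl_scale (-1/2) (cl_add (dY_left m M x)
                        (cl_mult m (cl_mult m (cl_e 1) (dY_left m M x)) (cl_e 1))))))"
proof -
  have e1: "(1::nat) \<in> {1..m}" using m2 by simp
  show ?thesis
    unfolding cl_ops_eq cl_mult_e_left[OF e1] cl_mult_e_right[OF e1]
    using two_sided_monogenic_trig_combo_iff[OF m2 sm dep]
      two_sided_monogenic_trig_combo_of_right_monogenic[OF m2]
    by blast
qed

end
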